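(* Let $n\ge2$ and $m=\lfloor (n-1)/2\rfloor$. Then \[R_n^{D,>}(x)=(1+x)^m\sum_{T\in\widetilde{\mathcal{DHR}}_n^+}x^{\max(T)+1},\qquad R_n^{D,<}(x)=(1+x)^m\sum_{T\in\widetilde{\mathcal{DHR}}_n^-}x^{\min(T)+1},\] and hence $R_n^{D}(x)$ is $(1+x)^m$ times the sum of these two tree sums, where $\max(T)$ (resp. $\min(T)$) is the number of inner nodes of $T$ that are max-nodes (resp. min-nodes).
   Context: $\mathfrak B_n$ is the set of signed permutations $\pi=\pi_1\cdots\pi_n$ (words over $\{\pm1,\dots,\pm n\}$ with $|\pi_1|,\dots,|\pi_n|$ a permutation of $[n]$), compared as integers; set $\pi_0=0$. $\mathfrak D_n$ is the set of $\pi\in\mathfrak B_n$ with an even number of negative entries. $\mathrm{run}_B(\pi)$ is $1$ plus the number of $i\in\{1,\dots,n-1\}$ with $\pi_{i-1}<\pi_i>\pi_{i+1}$ or $\pi_{i-1}>\pi_i<\pi_{i+1}$; $R_n^{D}(x)=\sum_{\pi\in\mathfrak D_n}x^{\mathrm{run}_B(\pi)}$, and $R_n^{D,>}(x)$, $R_n^{D,<}(x)$ are the same sums restricted to $\pi_1>0$ and to $\pi_1<0$. Trees are rooted binary trees with each child designated left or right. A min–max tree is labeled bijectively by a totally ordered set so that each node's label is the minimum or maximum of its subtree's labels. A node with a child is inner; an inner node is a min-node (resp. max-node) if its label is the minimum (resp. maximum) of its subtree. An HR-tree is a min–max tree in which every inner node $s$ has a nonempty right subtree containing the maximum label of the subtree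 of $s$ if $s$ is a min-node, the minimum if $s$ is a max-node. The reading word is the in-order reading $w(T)=w(L)\,\ell_{\mathrm{root}}\,w(R)$. $\mathcal{BHR}_n$ is the set of HR-trees with label set $\{0,s_1,\dots,s_n\}$, $s_i\in\{i,-i\}$, ordered as integers, such that $0$ is the first letter of $w(T)$. For $T\in\mathcal{BHR}_n$ with $w(T)=0\pi_1\cdots\pi_n$ ($0$ at position $0$), list the nodes having exactly one child by increasing position of their labels in this word; the $k$-th is an odd or even one-child node according to the parity of $k$. $\widetilde{\mathcal{BHR}}_n^{+}$ (resp. $\widetilde{\mathcal{BHR}}_n^{-}$) is the set of $T\in\mathcal{BHR}_n$ such that every node with two children is a max-node (resp. min-node) and every max-node (resp. min-node) with exactly one child is an even one-child node. $\widetilde{\mathcal{DHR}}_n^{\pm}$ is the set of trees in $\widetilde{\mathcal{BHR}}_n^{\pm}$ having an even number of negative labels. *)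

theory Defs
  imports Main "HOL-Library.Tree"
begin

definition signed_perms :: "nat \<Rightarrow> int list set" where
  "signed_perms n = {\<pi>. length \<pi> = n \<and> set (map abs \<pi>) = int ` {1..n}}"

definition D_perms :: "nat \<Rightarrow> int list set" where
  "D_perms n = {\<pi> \<in> signed_perms n. even (length (filter (\<lambda>v. v < 0) \<pi>))}"

text \<open>run_B with pi_0 = 0: the word w = 0 # pi has w!i = pi_i.\<close>
definition runB :: "int list \<Rightarrow> nat" where
  "runB \<pi> = (let w = 0 # \<pi> in
     1 + card {i \<in> {1..<length \<pi>}.
        (w!(i-1) < w!i \<and> w!i > w!(i+1)) \<or> (w!(i-1) > w!i \<and> w!i < w!(i+1))})"

definition RD :: "nat \<Rightarrow> 'a::comm_ring_1 \<Rightarrow> 'a" where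
  "RD n x = (\<Sum>\<pi>\<in>D_perms n. x ^ runB \<pi>)"

definition RD_pos :: "nat \<Rightarrow> 'a::comm_ring_1 \<Rightarrow> 'a" where
  "RD_pos n x = (\<Sum>\<pi>\<in>{\<pi> \<in> D_perms n. hd \<pi> > 0}. x ^ runB \<pi>)"

definition RD_neg :: "nat \<Rightarrow> 'a::comm_ring_1 \<Rightarrow> 'a" where
  "RD_neg n x = (\<Sum>\<pi>\<in>{\<pi> \<in> D_perms n. hd \<pi> < 0}. x ^ runB \<pi>)"

text \<open>Nodes of a tree, each represented by the subtree rooted at it.\<close>
fun tnodes :: "'a tree \<Rightarrow> 'a tree set" where
  "tnodes Leaf = {}"
| "tnodes (Node l a r) = insert (Node l a r) (tnodes l \<union> tnodes r)"

fun root_label :: "'a tree \<Rightarrow> 'a" where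
  "root_label (Node l a r) = a"

fun right_sub :: "'a tree \<Rightarrow> 'a tree" where
  "right_sub Leaf = Leaf"
| "right_sub (Node l a r) = r"

fun nchildren :: "'a tree \<Rightarrow> nat" where
  "nchildren Leaf = 0"
| "nchildren (Node l a r) = (if l \<noteq> Leaf then 1 else 0) + (if r \<noteq> Leaf then 1 else 0)"

definition is_inner :: "'a tree \<Rightarrow> bool" where
  "is_inner s = (nchildren s > 0)"

definition is_min_node :: "'a::linorder tree \<Rightarrow> bool" where
  "is_min_node s = (is_inner s \<and> root_label s = Min (set_tree s))"

definition is_max_node :: "'a::linorder tree \<Rightarrow> bool" where
  "is_max_node s = (is_inner s \<and> root_label s = Max (set_tree s))"

definition min_max_tree :: "'a::linorder tree \<Rightarrow> bool" where
  "min_max_tree T = (distinct (inorder T) \<and>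
     (\<forall>s\<in>tnodes T. root_label s = Min (set_tree s) \<or> root_label s = Max (set_tree s)))"

definition HR_tree :: "'a::linorder tree \<Rightarrow> bool" where
  "HR_tree T = (min_max_tree T \<and>
     (\<forall>s\<in>tnodes T. is_inner s \<longrightarrow>
        right_sub s \<noteq> Leaf \<and>
        (is_min_node s \<longrightarrow> Max (set_tree s) \<in> set_tree (right_sub s)) \<and>
        (is_max_node s \<longrightarrow> Min (set_tree s) \<in> set_tree (right_sub s))))"

text \<open>BHR_n: HR-trees whose reading word is 0 followed by a signed permutation of [n]
  (equivalently: label set {0,s_1,...,s_n}, s_i = +-i, with 0 first in the reading word).\<close>
definition BHR :: "nat \<Rightarrow> int tree set" where
  "BHR n = {T. HR_tree T \<and> (\<exists>\<pi>\<in>signed_perms n. inorder T = 0 # \<pi>)}"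

definition onechild_labels :: "'a tree \<Rightarrow> 'a set" where
  "onechild_labels T = {root_label s | s. s \<in> tnodes T \<and> nchildren s = 1}"

text \<open>Rank k (1-based) of label a among the one-child-node labels, in reading-word order.\<close>
definition oc_rank :: "'a tree \<Rightarrow> 'a \<Rightarrow> nat" where
  "oc_rank T a = length (filter (\<lambda>b. b \<in> onechild_labels T) (takeWhile (\<lambda>b. b \<noteq> a) (inorder T))) + 1"

definition even_onechild :: "'a tree \<Rightarrow> 'a tree \<Rightarrow> bool" where
  "even_onechild T s = (nchildren s = 1 \<and> even (oc_rank T (root_label s)))"

definition BHR_plus :: "nat \<Rightarrow> int tree set" where
  "BHR_plus n = {T \<in> BHR n.
     (\<forall>s\<in>tnodes T. nchildren s = 2 \<longrightarrow> is_max_node s) \<and>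
     (\<forall>s\<in>tnodes T. is_max_node s \<and> nchildren s = 1 \<longrightarrow> even_onechild T s)}"

definition BHR_minus :: "nat \<Rightarrow> int tree set" where
  "BHR_minus n = {T \<in> BHR n.
     (\<forall>s\<in>tnodes T. nchildren s = 2 \<longrightarrow> is_min_node s) \<and>
     (\<forall>s\<in>tnodes T. is_min_node s \<and> nchildren s = 1 \<longrightarrow> even_onechild T s)}"

definition DHR_plus :: "nat \<Rightarrow> int tree set" where
  "DHR_plus n = {T \<in> BHR_plus n. even (card {a \<in> set_tree T. a < 0})}"

definition DHR_minus :: "nat \<Rightarrow> int tree set" where
  "DHR_minus n = {T \<in> BHR_minus n. even (card {a \<in> set_tree T. a < 0})}"

definition max_count :: "'a::linorder tree \<Rightarrow> nat" where
  "max_count T = card {s \<in> tnodes T. is_max_node s}"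

definition min_count :: "'a::linorder tree \<Rightarrow> nat" where
  "min_count T = card {s \<in> tnodes T. is_min_node s}"

end

theory Submission
  imports Defs "HOL-Combinatorics.Multiset_Permutations"
begin

(* A word w of distinct letters is the reading word of exactly one HR-tree hr_of w: its root is the
   first letter of w that is the minimum or the maximum of w, and the two subtrees are built from the
   letters before and after it.  Group the words on a fixed set of letters by the unlabelled shape of
   their trees.  Cutting a word at its root, which is Min V or Max V, turns the sum over the words of
   one shape into a product of sums over the two subtrees, and this gives closed forms: if the shape has
   b two-child and u one-child nodes, the turning points of the words contribute x^b (1 + x)^(u + b - 1)
   and the tree statistic of the theorem contributes x^b (1 + x)^(u div 2), both times the same number
   of labelings.  A shape with n + 1 nodes has n = 2 b + u, so the two exponents differ by
   (n - 1) div 2 for every shape. *)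

section \<open>The HR-tree of a word\<close>

function hr_of :: "'a::linorder list \<Rightarrow> 'a tree" where
  "hr_of [] = Leaf"
| "hr_of (x # xs) = (let P = (\<lambda>y. y \<noteq> Min (set (x # xs)) \<and> y \<noteq> Max (set (x # xs)));
      rest = dropWhile P (x # xs) in Node (hr_of (takeWhile P (x # xs))) (hd rest) (hr_of (tl rest)))"
  by pat_completeness auto
termination
proof (relation "measure length", goal_cases)
  case (2 x xs P)
  have "Min (set (x # xs)) \<in> set (x # xs)" using Min_in[of "set (x # xs)"] by simp
  then have "\<exists>y\<in>set (x # xs). \<not> P y" using 2 by blast
  moreover have "\<exists>y\<in>set ys. \<not> P y \<Longrightarrow> length (takeWhile P ys) < length ys" for ys
    by (induction ys) auto
  ultimately show ?case by simp
next
  case (3 x xs P rest)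
  then show ?case using length_dropWhile_le[of P "x # xs"] by simp
qed simp

declare hr_of.simps(2)[simp del]

definition root_split :: "'a::linorder list \<Rightarrow> 'a list \<Rightarrow> 'a \<Rightarrow> 'a list \<Rightarrow> bool" where
  "root_split w l a r \<longleftrightarrow> w = l @ a # r \<and> a \<in> {Min (set w), Max (set w)} \<and>
     Min (set w) \<notin> set l \<and> Max (set w) \<notin> set l"

lemma hr_of_root_split:
  assumes "root_split w l a r"
  shows "hr_of w = Node (hr_of l) a (hr_of r)"
proof -
  define P where "P = (\<lambda>z. z \<noteq> Min (set w) \<and> z \<noteq> Max (set w))"
  have w: "w = l @ a # r" and "\<forall>z\<in>set l. P z" and "\<not> P a"
    using assms unfolding root_split_def P_def by auto
  then have "takeWhile P w = l" "dropWhile P w = a # r"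
    by (simp_all add: takeWhile_append2 dropWhile_append2)
  moreover obtain y ys where "w = y # ys" using w by (cases l) auto
  ultimately show ?thesis unfolding P_def by (simp add: Let_def hr_of.simps(2))
qed

lemma root_split_exists:
  assumes "w \<noteq> []"
  shows "\<exists>l a r. root_split w l a r"
proof -
  define P where "P = (\<lambda>z. z \<noteq> Min (set w) \<and> z \<noteq> Max (set w))"
  have "\<exists>z\<in>set w. \<not> P z" using assms unfolding P_def by auto
  then obtain a r where dw: "dropWhile P w = a # r"
    by (metis dropWhile_eq_Nil_conv neq_Nil_conv)
  then have "\<not> P a" by (metis dropWhile_eq_Cons_conv)
  moreover have "w = takeWhile P w @ a # r" using dw by (metis takeWhile_dropWhile_id)
  moreover have "\<forall>z\<in>set (takeWhile P w). P z" by (meson set_takeWhileD)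
  ultimately show ?thesis unfolding root_split_def P_def by blast
qed

lemma root_split_length:
  "root_split w l a r \<Longrightarrow> length l < length w \<and> length r < length w"
  unfolding root_split_def by auto

lemma hr_of_induct [case_names Nil split]:
  assumes "P []"
    and "\<And>w l a r. root_split w l a r \<Longrightarrow> P l \<Longrightarrow> P r \<Longrightarrow> P w"
  shows "P w"
proof (induction "length w" arbitrary: w rule: less_induct)
  case less
  show ?case
  proof (cases "w = []")
    case False
    then obtain l a r where "root_split w l a r" using root_split_exists by blast
    then show ?thesis using assms(2) less root_split_length by blast
  qed (use assms(1) in simp)
qed

lemma inorder_hr_of [simp]: "inorder (hr_of w) = w"
  by (induction w rule: hr_of_induct)
    (auto simp: hr_of_root_split root_split_def)

lemma set_tree_hr_of [simp]: "set_tree (hr_of w) = set w"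
  by (metis inorder_hr_of set_inorder)

lemma hr_of_eq_Leaf_iff [simp]: "hr_of w = Leaf \<longleftrightarrow> w = []"
  by (metis inorder_hr_of inorder.simps(1) hr_of.simps(1))

lemma Min_ne_Max:
  assumes "finite V" "card V \<ge> 2"
  shows "Min V \<noteq> Max V"
proof -
  have "\<not> V \<subseteq> {Min V}" using assms card_mono[of "{Min V}" V] by force
  then obtain v where "v \<in> V" "v \<noteq> Min V" by blast
  then show ?thesis using assms(1) by (metis Max_ge Min_le order.antisym)
qed

definition hr_node :: "'a::linorder tree \<Rightarrow> bool" where
  "hr_node s \<longleftrightarrow> (root_label s = Min (set_tree s) \<or> root_label s = Max (set_tree s)) \<and>
     (is_inner s \<longrightarrow> right_sub s \<noteq> Leaf \<and>
        (is_min_node s \<longrightarrow> Max (set_tree s) \<in> set_tree (right_sub s)) \<and>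
        (is_max_node s \<longrightarrow> Min (set_tree s) \<in> set_tree (right_sub s)))"

lemma HR_tree_iff: "HR_tree T \<longleftrightarrow> distinct (inorder T) \<and> (\<forall>s\<in>tnodes T. hr_node s)"
  unfolding HR_tree_def min_max_tree_def hr_node_def by blast

lemma HR_tree_Node_iff:
  "HR_tree (Node L a R) \<longleftrightarrow>
     distinct (inorder (Node L a R)) \<and> hr_node (Node L a R) \<and> HR_tree L \<and> HR_tree R"
  unfolding HR_tree_iff by auto

lemma hr_node_root_split:
  assumes "distinct w" "root_split w l a r"
  shows "hr_node (Node (hr_of l) a (hr_of r))"
proof -
  define M X where "M = Min (set w)" and "X = Max (set w)"
  have w: "w = l @ a # r" and a: "a \<in> {M, X}" and l: "M \<notin> set l" "X \<notin> set l"
    using assms(2) unfolding root_split_def M_def X_def by auto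
  let ?T = "Node (hr_of l) a (hr_of r)"
  have sT: "set_tree ?T = set w" using w by simp
  have "r \<noteq> [] \<and> M \<noteq> X \<and> {M, X} - {a} \<subseteq> set r" if "is_inner ?T"
  proof -
    have "length w \<ge> 2" using that w unfolding is_inner_def by (cases l; cases r) auto
    then have "M \<noteq> X"
      using assms(1) Min_ne_Max[of "set w"] unfolding M_def X_def by (simp add: distinct_card)
    moreover have "w \<noteq> []" using w by simp
    then have "M \<in> set w" "X \<in> set w" unfolding M_def X_def by simp_all
    ultimately show ?thesis using a l w by auto
  qed
  then show ?thesis
    using a sT unfolding hr_node_def is_min_node_def is_max_node_def M_def X_def by auto
qed

lemma HR_tree_hr_of: "distinct w \<Longrightarrow> HR_tree (hr_of w)"
proof (induction w rule: hr_of_induct)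
  case Nil
  then show ?case by (simp add: HR_tree_iff)
next
  case (split w l a r)
  then have "distinct (l @ a # r)" by (simp add: root_split_def)
  then show ?case
    using split hr_node_root_split[OF split.prems split.hyps(1)]
    by (simp add: hr_of_root_split[OF split.hyps(1)] HR_tree_Node_iff)
qed

lemma root_split_inorder:
  assumes "HR_tree (Node L a R)"
  shows "root_split (inorder (Node L a R)) (inorder L) a (inorder R)"
proof -
  define V where "V = set_tree (Node L a R)"
  have d: "a \<notin> set_tree L" "set_tree L \<inter> set_tree R = {}" and hr: "hr_node (Node L a R)"
    using assms HR_tree_Node_iff[of L a R] by auto
  have ext: "a = Min V \<or> a = Max V"
    using hr unfolding hr_node_def root_label.simps V_def[symmetric] by blast
  have "Min V \<notin> set_tree L \<and> Max V \<notin> set_tree L"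
  proof (cases "L = Leaf")
    case False
    then have "is_inner (Node L a R)" by (simp add: is_inner_def)
    then have "(a = Min V \<longrightarrow> Max V \<in> set_tree R) \<and> (a = Max V \<longrightarrow> Min V \<in> set_tree R)"
      using hr unfolding hr_node_def is_min_node_def is_max_node_def root_label.simps
        right_sub.simps V_def[symmetric] by blast
    with ext d show ?thesis by (metis disjoint_iff)
  qed simp
  then show ?thesis using ext unfolding root_split_def V_def by simp
qed

lemma hr_of_inorder: "HR_tree T \<Longrightarrow> hr_of (inorder T) = T"
proof (induction T)
  case (Node L a R)
  then show ?case
    using hr_of_root_split[OF root_split_inorder] HR_tree_Node_iff by metis
qed simp

lemma distinct_signed_perm:
  assumes "\<pi> \<in> signed_perms n"
  shows "distinct (0 # \<pi>)"
proof -
  have "length \<pi> = n" and s: "set (map abs \<pi>) = int ` {1..n}"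
    using assms unfolding signed_perms_def by auto
  then have "distinct (map abs \<pi>)" by (simp add: card_distinct card_image)
  then have "distinct \<pi>" by (metis distinct_map)
  moreover have "0 \<notin> set (map abs \<pi>)" using s by auto
  then have "0 \<notin> set \<pi>" by (metis abs_zero image_eqI list.set_map)
  ultimately show ?thesis by simp
qed

lemma BHR_eq_image: "BHR n = (\<lambda>\<pi>. hr_of (0 # \<pi>)) ` signed_perms n"
proof
  show "BHR n \<subseteq> (\<lambda>\<pi>. hr_of (0 # \<pi>)) ` signed_perms n"
    unfolding BHR_def using hr_of_inorder by force
  show "(\<lambda>\<pi>. hr_of (0 # \<pi>)) ` signed_perms n \<subseteq> BHR n"
    unfolding BHR_def using HR_tree_hr_of[OF distinct_signed_perm] by auto
qed

section \<open>Splitting a word at an extremum\<close>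

lemma takeWhile_append_Cons:
  "set l \<inter> E = {} \<Longrightarrow> a \<in> E \<Longrightarrow> takeWhile (\<lambda>z. z \<notin> E) (l @ a # r) = l"
  by (induction l) auto

lemma root_split_unique:
  assumes "root_split w l a r" "root_split w l' a' r'"
  shows "l = l' \<and> a = a' \<and> r = r'"
proof -
  let ?E = "{Min (set w), Max (set w)}"
  have tw: "takeWhile (\<lambda>z. z \<notin> ?E) w = l" if "root_split w l a r" for l a r
  proof -
    have "w = l @ a # r" "set l \<inter> ?E = {}" "a \<in> ?E" using that unfolding root_split_def by blast+
    then show ?thesis using takeWhile_append_Cons by metis
  qed
  have "l = l'" using tw[OF assms(1)] tw[OF assms(2)] by (rule trans[OF sym])
  moreover have "l @ a # r = l' @ a' # r'" using assms unfolding root_split_def by blast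
  ultimately show ?thesis by simp
qed

definition extreme :: "'a::linorder set \<Rightarrow> bool \<Rightarrow> 'a" where
  "extreme V b = (if b then Max V else Min V)"

lemma extreme_in: "finite V \<Longrightarrow> V \<noteq> {} \<Longrightarrow> extreme V b \<in> V"
  unfolding extreme_def by auto

lemma extreme_eq_iff:
  "finite V \<Longrightarrow> card V \<ge> 2 \<Longrightarrow> extreme V b = extreme V b' \<longleftrightarrow> b = b'"
  unfolding extreme_def using Min_ne_Max[of V] by (cases b; cases b') auto

lemma extreme_opposite_in:
  assumes V: "finite V" "card V \<ge> 2" and A: "A \<subseteq> V - {Min V, Max V}"
  shows "extreme V (\<not> b) \<in> V - {extreme V b} - A"
proof -
  have "extreme V (\<not> b) \<in> {Min V, Max V} - {extreme V b}"
    using Min_ne_Max[OF V] by (simp add: extreme_def)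
  moreover have "extreme V (\<not> b) \<in> V" using V by (intro extreme_in) auto
  ultimately show ?thesis using A by blast
qed

lemma extreme_split:
  assumes V: "finite V" "card V \<ge> 2" and A: "A \<subseteq> V - {Min V, Max V}"
    and l: "l \<in> permutations_of_set A"
    and r: "r \<in> permutations_of_set (V - {extreme V b} - A)"
  shows "l @ extreme V b # r \<in> permutations_of_set V"
    and "root_split (l @ extreme V b # r) l (extreme V b) r"
    and "r \<noteq> []"
    and "\<And>v. v \<in> set l \<union> set r \<Longrightarrow> if b then v < extreme V b else extreme V b < v"
proof -
  let ?e = "extreme V b"
  have ne: "V \<noteq> {}" using V(2) by auto
  note sl = permutations_of_setD[OF l] and sr = permutations_of_setD[OF r]
  have e: "?e \<in> V" "?e \<in> {Min V, Max V}"
    using extreme_in[OF V(1) ne] by (simp_all add: extreme_def)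
  have sw: "set (l @ ?e # r) = V" using sl sr A e by auto
  show "l @ ?e # r \<in> permutations_of_set V"
    using sl sr A e(2) sw by (intro permutations_of_setI) auto
  show "root_split (l @ ?e # r) l ?e r"
    unfolding root_split_def sw using sl A e(2) by auto
  have "extreme V (\<not> b) \<in> set r" unfolding sr(1) by (rule extreme_opposite_in[OF V A])
  then show "r \<noteq> []" by auto
  fix v assume "v \<in> set l \<union> set r"
  then have "v \<in> V" "v \<noteq> ?e" using sl sr A e(2) by blast+
  moreover from \<open>v \<in> V\<close> have "Min V \<le> v" "v \<le> Max V" using V(1) by simp_all
  ultimately show "if b then v < ?e else ?e < v" unfolding extreme_def by (cases b) simp_all
qed

lemma extreme_split_bij:
  assumes V: "finite V" "card V \<ge> 2"
  shows "bij_betw (\<lambda>(b, A, l, r). l @ extreme V b # r)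
     (SIGMA b:UNIV. SIGMA A:Pow (V - {Min V, Max V}).
        permutations_of_set A \<times> permutations_of_set (V - {extreme V b} - A))
     (permutations_of_set V)"
    (is "bij_betw ?g ?S _")
proof (rule bij_betw_imageI)
  show "inj_on ?g ?S"
  proof (rule inj_onI, clarsimp)
    fix b A l r b' A' l' r'
    assume A: "A \<subseteq> V - {Min V, Max V}" "l \<in> permutations_of_set A"
        "r \<in> permutations_of_set (V - {extreme V b} - A)"
      and A': "A' \<subseteq> V - {Min V, Max V}" "l' \<in> permutations_of_set A'"
        "r' \<in> permutations_of_set (V - {extreme V b'} - A')"
      and eq: "l @ extreme V b # r = l' @ extreme V b' # r'"
    have "l = l' \<and> extreme V b = extreme V b' \<and> r = r'"
      using root_split_unique extreme_split(2)[OF V A] extreme_split(2)[OF V A'] eq by metis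
    moreover have "A = set l" "A' = set l'"
      using permutations_of_setD(1)[OF A(2)] permutations_of_setD(1)[OF A'(2)] by simp_all
    ultimately show "b = b' \<and> A = A' \<and> l = l' \<and> r = r'" using extreme_eq_iff[OF V] by simp
  qed
  show "?g ` ?S = permutations_of_set V"
  proof
    show "?g ` ?S \<subseteq> permutations_of_set V" using extreme_split(1)[OF V] by auto
  next
    show "permutations_of_set V \<subseteq> ?g ` ?S"
    proof
      fix w assume w: "w \<in> permutations_of_set V"
      note sw = permutations_of_setD[OF w]
      have "w \<noteq> []" using sw(1) V(2) by (metis card.empty list.set(1) not_numeral_le_zero)
      then obtain l a r where "root_split w l a r" using root_split_exists by blast
      then have w_eq: "w = l @ a # r" and a: "a \<in> {Min V, Max V}" and l: "set l \<inter> {Min V, Max V} = {}"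
        unfolding root_split_def sw(1) by blast+
      define b where "b = (a = Max V)"
      have a_eq: "extreme V b = a" using a unfolding b_def extreme_def by auto
      have "set l \<subseteq> V" "a \<in> V" "set r \<subseteq> V" "V \<subseteq> set l \<union> {a} \<union> set r"
        and "distinct l" "distinct r" "a \<notin> set l" "a \<notin> set r" "set l \<inter> set r = {}"
        using sw unfolding w_eq by auto
      then have "set l \<subseteq> V - {Min V, Max V}" "l \<in> permutations_of_set (set l)"
        "r \<in> permutations_of_set (V - {extreme V b} - set l)"
        using l unfolding a_eq permutations_of_set_def by blast+
      then have "(b, set l, l, r) \<in> ?S" by simp
      moreover have "w = ?g (b, set l, l, r)" using w_eq a_eq by simp
      ultimately show "w \<in> ?g ` ?S" by (rule rev_image_eqI)
    qed
  qed
qed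

section \<open>Sums over the words of a given shape\<close>

definition shape :: "'a::linorder list \<Rightarrow> unit tree" where
  "shape w = map_tree (\<lambda>_. ()) (hr_of w)"

lemma shape_root_split: "root_split w l a r \<Longrightarrow> shape w = Node (shape l) () (shape r)"
  unfolding shape_def by (simp add: hr_of_root_split)

lemma shape_eq_Leaf_iff [simp]: "shape w = Leaf \<longleftrightarrow> w = []"
  unfolding shape_def by (cases "hr_of w") auto

lemma size_shape [simp]: "size (shape w) = length w"
  unfolding shape_def by (metis inorder_hr_of length_inorder size_map_tree)

lemma hr_of_singleton [simp]: "hr_of [v] = Node Leaf v Leaf"
  using hr_of_root_split[of "[v]" "[]" v "[]"] by (simp add: root_split_def)

definition shape_sum :: "'a::linorder set \<Rightarrow> unit tree \<Rightarrow> ('a list \<Rightarrow> 'b::comm_monoid_add) \<Rightarrow> 'b"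
  where "shape_sum V S F = (\<Sum>w\<in>permutations_of_set V. if shape w = S then F w else 0)"

lemma shape_sum_cong:
  "(\<And>w. w \<in> permutations_of_set V \<Longrightarrow> shape w = S \<Longrightarrow> F w = G w) \<Longrightarrow>
    shape_sum V S F = shape_sum V S G"
  unfolding shape_sum_def by (intro sum.cong) auto

lemma shape_sum_eq_0: "card V \<noteq> size S \<Longrightarrow> shape_sum V S F = 0"
  unfolding shape_sum_def
  by (intro sum.neutral) (auto dest: length_finite_permutations_of_set)

lemma shape_sum_Leaf: "shape_sum V Leaf F = (if V = {} then F [] else 0)"
proof -
  have "shape_sum V Leaf F = (\<Sum>w\<in>permutations_of_set V. if w = [] then F w else 0)"
    unfolding shape_sum_def by simp
  also have "\<dots> = (if [] \<in> permutations_of_set V then F [] else 0)" by (simp add: sum.delta')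
  finally show ?thesis by (simp add: permutations_of_set_def)
qed

lemma shape_sum_singleton:
  "shape_sum {v} S F = (if S = Node Leaf () Leaf then F [v] else 0)"
  unfolding shape_sum_def shape_def by auto

lemma shape_sum_0 [simp]: "shape_sum V S (\<lambda>_. 0) = 0"
  unfolding shape_sum_def by simp

lemma shape_sum_mult: "shape_sum V S (\<lambda>w. c * F w) = c * shape_sum V S (F :: _ \<Rightarrow> 'b::semiring_0)"
  unfolding shape_sum_def sum_distrib_left by (intro sum.cong) auto

lemma shape_sum_sum: "shape_sum V S (\<lambda>w. \<Sum>i\<in>I. F i w) = (\<Sum>i\<in>I. shape_sum V S (F i))"
  unfolding shape_sum_def by (subst sum.swap) (intro sum.cong, auto)

lemma shape_sum_Node:
  fixes F :: "'a::linorder list \<Rightarrow> 'b::comm_monoid_add"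
  assumes V: "finite V" "card V \<ge> 2"
  shows "shape_sum V (Node L () R) F = (\<Sum>b\<in>UNIV. \<Sum>A\<in>Pow (V - {Min V, Max V}).
     shape_sum A L (\<lambda>l. shape_sum (V - {extreme V b} - A) R (\<lambda>r. F (l @ extreme V b # r))))"
proof -
  let ?X = "Pow (V - {Min V, Max V})"
  let ?P = permutations_of_set
  let ?G = "\<lambda>b A l r. if shape l = L \<and> shape r = R then F (l @ extreme V b # r) else 0"
  let ?S = "SIGMA b:UNIV. SIGMA A:?X. ?P A \<times> ?P (V - {extreme V b} - A)"
  have "shape (l @ extreme V b # r) = Node (shape l) () (shape r)" if "(b, A, l, r) \<in> ?S" for b A l r
    using that shape_root_split[OF extreme_split(2)[OF V]] by blast
  then have "shape_sum V (Node L () R) F = (\<Sum>(b, A, l, r)\<in>?S. ?G b A l r)"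
    unfolding shape_sum_def sum.reindex_bij_betw[OF extreme_split_bij[OF V], symmetric]
    by (intro sum.cong refl) auto
  also have "\<dots> = (\<Sum>b\<in>UNIV. \<Sum>(A, l, r)\<in>(SIGMA A:?X. ?P A \<times> ?P (V - {extreme V b} - A)).
      ?G b A l r)"
    using V(1) by (subst sum.Sigma) auto
  also have "\<dots> = (\<Sum>b\<in>UNIV. \<Sum>A\<in>?X. \<Sum>(l, r)\<in>?P A \<times> ?P (V - {extreme V b} - A). ?G b A l r)"
    using V(1) by (subst sum.Sigma) auto
  also have "\<dots> = (\<Sum>b\<in>UNIV. \<Sum>A\<in>?X. \<Sum>l\<in>?P A. \<Sum>r\<in>?P (V - {extreme V b} - A). ?G b A l r)"
    by (simp add: sum.cartesian_product)
  also have "\<dots> = (\<Sum>b\<in>UNIV. \<Sum>A\<in>?X.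
     shape_sum A L (\<lambda>l. shape_sum (V - {extreme V b} - A) R (\<lambda>r. F (l @ extreme V b # r))))"
    unfolding shape_sum_def by (intro sum.cong refl) (simp add: sum.neutral)
  finally show ?thesis .
qed

lemma shape_sum_Node_Leaf:
  assumes V: "finite V" "card V \<ge> 2"
  shows "shape_sum V (Node L () Leaf) F = 0"
proof -
  have "V - {extreme V b} - A \<noteq> {}" if "A \<subseteq> V - {Min V, Max V}" for A b
    using extreme_opposite_in[OF V that] by blast
  then show ?thesis by (simp add: shape_sum_Node[OF V] shape_sum_Leaf)
qed

lemma shape_sum_Leaf_Node:
  assumes V: "finite V" "card V \<ge> 2"
  shows "shape_sum V (Node Leaf () R) F =
    (\<Sum>b\<in>UNIV. shape_sum (V - {extreme V b}) R (\<lambda>r. F (extreme V b # r)))"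
  using V by (simp add: shape_sum_Node shape_sum_Leaf if_distrib sum.delta cong: if_cong)

section \<open>Turning points\<close>

fun turn :: "'a::linorder option \<Rightarrow> 'a \<Rightarrow> 'a option \<Rightarrow> bool" where
  "turn (Some p) y (Some q) \<longleftrightarrow> p < y \<and> y > q \<or> p > y \<and> y < q"
| "turn _ _ _ \<longleftrightarrow> False"

fun turns :: "'a::linorder option \<Rightarrow> 'a list \<Rightarrow> 'a option \<Rightarrow> nat" where
  "turns a [] c = 0"
| "turns a [y] c = of_bool (turn a y c)"
| "turns a (y # z # zs) c = of_bool (turn a y (Some z)) + turns (Some y) (z # zs) c"

lemma turns_append_Cons:
  "turns a (l @ y # r) c = turns a l (Some y) +
     of_bool (turn (if l = [] then a else Some (last l)) y (if r = [] then c else Some (hd r))) +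
     turns (Some y) r c"
proof (induction l arbitrary: a)
  case Nil
  then show ?case by (cases r) auto
next
  case (Cons z zs)
  then show ?case by (cases zs) auto
qed

definition turn_at :: "'a::linorder list \<Rightarrow> nat \<Rightarrow> bool" where
  "turn_at u i \<longleftrightarrow> turn (Some (u ! (i - 1))) (u ! i) (Some (u ! Suc i))"

lemma turns_eq_card: "turns (Some p) w None = card {i \<in> {1..<length w}. turn_at (p # w) i}"
proof -
  have "turns (Some p) w None = (\<Sum>i = 1..<length w. of_bool (turn_at (p # w) i))"
  proof (induction w arbitrary: p)
    case (Cons y w)
    show ?case
    proof (cases w)
      case (Cons z zs)
      let ?f = "\<lambda>u i. of_bool (turn_at u i) :: nat"
      have "(\<Sum>i = 1..<length (y # w). ?f (p # y # w) i) =
          ?f (p # y # w) 1 + (\<Sum>i = Suc 1..<Suc (length w). ?f (p # y # w) i)"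
        using Cons by (subst sum.atLeast_Suc_lessThan) (simp_all del: sum_of_bool_eq)
      also have "(\<Sum>i = Suc 1..<Suc (length w). ?f (p # y # w) i) = (\<Sum>i = 1..<length w. ?f (y # w) i)"
        unfolding sum.shift_bounds_Suc_ivl by (intro sum.cong refl) (auto simp: turn_at_def nth_Cons')
      finally have "(\<Sum>i = 1..<length (y # w). ?f (p # y # w) i) =
          of_bool (turn (Some p) y (Some z)) + (\<Sum>i = 1..<length w. ?f (y # w) i)"
        using Cons by (simp add: turn_at_def del: sum_of_bool_eq)
      then show ?thesis using Cons.IH Cons by simp
    qed simp
  qed simp
  then show ?thesis by (simp add: Int_def)
qed

lemma runB_eq_turns: "runB \<pi> = 1 + turns None (0 # \<pi>) None"
proof -
  have "runB \<pi> = 1 + turns (Some 0) \<pi> None"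
    unfolding runB_def turns_eq_card Let_def turn_at_def by simp
  also have "turns (Some 0) \<pi> None = turns None (0 # \<pi>) None" by (cases \<pi>) auto
  finally show ?thesis .
qed

lemma turn_extreme:
  assumes "if b then v < e else e < v" "p \<noteq> e"
  shows "turn (Some p) e (Some v) \<longleftrightarrow> (p < e \<longleftrightarrow> b)"
  using assms by (cases b) auto

lemma turns_extreme_split:
  assumes V: "finite V" "card V \<ge> 2" and A: "A \<subseteq> V - {Min V, Max V}"
    and l: "l \<in> permutations_of_set A"
    and r: "r \<in> permutations_of_set (V - {extreme V b} - A)"
  shows "turns a (l @ extreme V b # r) c =
     (if l = [] then of_bool (turn a (extreme V b) (Some (hd r)))
      else turns a l (Some (extreme V b)) + 1) + turns (Some (extreme V b)) r c"
proof -
  note side = extreme_split(4)[OF V A l r]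
  have r_ne: "r \<noteq> []" by (rule extreme_split(3)[OF V A l r])
  have "turn (Some (last l)) (extreme V b) (Some (hd r))" if "l \<noteq> []"
    using side[of "last l"] side[of "hd r"] that r_ne by (cases b) auto
  then show ?thesis using r_ne by (simp add: turns_append_Cons)
qed

text \<open>Adding a last neighbour above or below all letters: exactly one of the two choices creates a
  turning point at the last letter.\<close>

lemma turns_last_neighbours:
  fixes x :: "'b::comm_semiring_1"
  assumes "distinct w" "w \<noteq> []" "\<forall>v\<in>set w. lo < v \<and> v < hi"
    and "case a of None \<Rightarrow> length w \<ge> 2 | Some p \<Rightarrow> p \<notin> set w"
  shows "x ^ turns a w (Some hi) + x ^ turns a w (Some lo) = (1 + x) * x ^ turns a w None"
proof -
  obtain u y where w: "w = u @ [y]" using assms(2) by (cases w rule: rev_exhaust) auto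
  obtain q where q: "(if u = [] then a else Some (last u)) = Some q" "q \<noteq> y"
    using assms(1,4) w by (cases u rule: rev_exhaust; cases a) auto
  have "y < hi" "lo < y" using assms(3) w by auto
  then have "of_bool (turn (Some q) y (Some hi)) + of_bool (turn (Some q) y (Some lo)) = (1::nat)"
    using q(2) by auto
  then show ?thesis
    unfolding w turns_append_Cons q(1) by (auto simp: power_add algebra_simps)
qed

fun count_nodes :: "('a tree \<Rightarrow> bool) \<Rightarrow> 'a tree \<Rightarrow> nat" where
  "count_nodes P Leaf = 0"
| "count_nodes P (Node l a r) = of_bool (P (Node l a r)) + count_nodes P l + count_nodes P r"

abbreviation unary_count :: "'a tree \<Rightarrow> nat" where
  "unary_count \<equiv> count_nodes (\<lambda>s. nchildren s = 1)"

abbreviation binary_count :: "'a tree \<Rightarrow> nat" where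
  "binary_count \<equiv> count_nodes (\<lambda>s. nchildren s = 2)"

lemma nchildren_map_tree [simp]: "nchildren (map_tree f s) = nchildren s"
  by (cases s) auto

lemma count_nchildren_map_tree [simp]:
  "count_nodes (\<lambda>s. nchildren s = k) (map_tree f T) = count_nodes (\<lambda>s. nchildren s = k) T"
  by (induction T) simp_all

lemma tnodes_subset: "s \<in> tnodes T \<Longrightarrow> s \<noteq> Leaf \<and> set_tree s \<subseteq> set_tree T \<and> size s \<le> size T"
  by (induction T) auto

lemma root_label_in_set_tree: "s \<in> tnodes T \<Longrightarrow> root_label s \<in> set_tree T"
  using tnodes_subset by (cases s) fastforce+

lemma finite_tnodes: "finite (tnodes T)"
  by (induction T) auto

lemma card_tnodes_eq_count_nodes:
  "distinct (inorder T) \<Longrightarrow> card {s \<in> tnodes T. P s} = count_nodes P T"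
proof (induction T)
  case (Node L a R)
  have "set_tree L \<inter> set_tree R = {}" using Node.prems by auto
  then have "tnodes L \<inter> tnodes R = {}" using root_label_in_set_tree by blast
  moreover have "Node L a R \<notin> tnodes L \<union> tnodes R"
    using tnodes_subset[of "Node L a R" L] tnodes_subset[of "Node L a R" R] by auto
  moreover have "{s \<in> tnodes (Node L a R). P s} = (if P (Node L a R) then {Node L a R} else {}) \<union>
      {s \<in> tnodes L. P s} \<union> {s \<in> tnodes R. P s}" by auto
  moreover have "finite {s \<in> tnodes T. P s}" for T by (rule finite_subset[OF _ finite_tnodes]) auto
  ultimately show ?case using Node by (simp add: card_Un_disjoint card_insert_if disjoint_iff)
qed simp

lemma onechild_labels_Node:
  "onechild_labels (Node L a R) = onechild_labels L \<union> onechild_labels R \<union>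
     (if nchildren (Node L a R) = 1 then {a} else {})"
proof -
  have "onechild_labels (Node L a R) =
      {root_label s |s. s = Node L a R \<and> nchildren s = 1} \<union> onechild_labels L \<union> onechild_labels R"
    unfolding onechild_labels_def by (simp only: tnodes.simps) blast
  also have "{root_label s |s. s = Node L a R \<and> nchildren s = 1} =
      (if nchildren (Node L a R) = 1 then {a} else {})"
    by auto
  finally show ?thesis by auto
qed

lemma onechild_labels_Leaf [simp]: "onechild_labels Leaf = {}"
  unfolding onechild_labels_def by simp

lemma onechild_labels_subset: "onechild_labels T \<subseteq> set_tree T"
  by (induction T) (auto simp: onechild_labels_Node)

lemma onechild_labels_Node_restrict:
  assumes "distinct (inorder (Node L a R))"
  shows "b \<in> set_tree L \<Longrightarrow> b \<in> onechild_labels (Node L a R) \<longleftrightarrow> b \<in> onechild_labels L"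
    and "b \<in> set_tree R \<Longrightarrow> b \<in> onechild_labels (Node L a R) \<longleftrightarrow> b \<in> onechild_labels R"
    and "a \<in> onechild_labels (Node L a R) \<longleftrightarrow> nchildren (Node L a R) = 1"
  using assms onechild_labels_subset[of L] onechild_labels_subset[of R]
  unfolding onechild_labels_Node by auto

lemma length_filter_onechild_labels:
  "distinct (inorder T) \<Longrightarrow> length (filter (\<lambda>b. b \<in> onechild_labels T) (inorder T)) = unary_count T"
proof (induction T)
  case (Node L a R)
  have "filter (\<lambda>b. b \<in> onechild_labels (Node L a R)) (inorder L) =
        filter (\<lambda>b. b \<in> onechild_labels L) (inorder L)"
    "filter (\<lambda>b. b \<in> onechild_labels (Node L a R)) (inorder R) =
        filter (\<lambda>b. b \<in> onechild_labels R) (inorder R)"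
    using onechild_labels_Node_restrict[OF Node.prems] by (auto intro: filter_cong)
  then show ?case using Node onechild_labels_Node_restrict(3)[OF Node.prems] by simp
qed simp

lemma oc_rank_Node:
  assumes d: "distinct (inorder (Node L a R))"
  shows "oc_rank (Node L a R) b =
    (if b \<in> set_tree L then oc_rank L b else if b = a then unary_count L + 1
     else unary_count L + of_bool (nchildren (Node L a R) = 1) + oc_rank R b)"
proof -
  let ?T = "Node L a R"
  have dL: "distinct (inorder L)" using d by simp
  note restr = onechild_labels_Node_restrict[OF d]
  have "filter (\<lambda>b. b \<in> onechild_labels ?T) (takeWhile (\<lambda>c. c \<noteq> b) (inorder L)) =
      filter (\<lambda>b. b \<in> onechild_labels L) (takeWhile (\<lambda>c. c \<noteq> b) (inorder L))"
    "filter (\<lambda>b. b \<in> onechild_labels ?T) (takeWhile (\<lambda>c. c \<noteq> b) (inorder R)) =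
      filter (\<lambda>b. b \<in> onechild_labels R) (takeWhile (\<lambda>c. c \<noteq> b) (inorder R))"
    "filter (\<lambda>b. b \<in> onechild_labels ?T) (inorder L) =
      filter (\<lambda>b. b \<in> onechild_labels L) (inorder L)"
    using restr(1,2) by (auto intro!: filter_cong dest: set_takeWhileD)
  moreover have "takeWhile (\<lambda>c. c \<noteq> b) (inorder ?T) = (if b \<in> set_tree L
      then takeWhile (\<lambda>c. c \<noteq> b) (inorder L) else if b = a then inorder L
      else inorder L @ a # takeWhile (\<lambda>c. c \<noteq> b) (inorder R))"
  proof (cases "b \<in> set_tree L")
    case False
    then have "takeWhile (\<lambda>c. c \<noteq> b) (inorder L @ a # inorder R) =
        inorder L @ takeWhile (\<lambda>c. c \<noteq> b) (a # inorder R)"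
      by (intro takeWhile_append2) auto
    then show ?thesis using False by simp
  qed (simp add: takeWhile_append1)
  ultimately show ?thesis
    using restr(3) length_filter_onechild_labels[OF dL] unfolding oc_rank_def by auto
qed

definition extreme_node :: "bool \<Rightarrow> 'a::linorder tree \<Rightarrow> bool" where
  "extreme_node s t \<longleftrightarrow> (if s then is_max_node t else is_min_node t)"

text \<open>The condition defining \<open>\<widetilde>BHR\<^sup>+\<close> (for \<open>s\<close>) and \<open>\<widetilde>BHR\<^sup>-\<close> (for \<open>\<not> s\<close>) at a node
  whose rank among the one-child nodes is \<open>k\<close>.\<close>

definition tilde_node :: "bool \<Rightarrow> 'a::linorder tree \<Rightarrow> nat \<Rightarrow> bool" where
  "tilde_node s t k \<longleftrightarrow> (nchildren t = 2 \<longrightarrow> extreme_node s t) \<and>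
     (extreme_node s t \<and> nchildren t = 1 \<longrightarrow> even k)"

text \<open>The parameter \<open>c\<close> counts the one-child nodes that precede \<open>T\<close> in the reading word of the
  whole tree, so that \<open>c + unary_count L + 1\<close> is the rank of the root.\<close>

fun tilde_ok :: "bool \<Rightarrow> nat \<Rightarrow> 'a::linorder tree \<Rightarrow> bool" where
  "tilde_ok s c Leaf = True"
| "tilde_ok s c (Node L a R) \<longleftrightarrow> tilde_node s (Node L a R) (c + unary_count L + 1) \<and>
     tilde_ok s c L \<and> tilde_ok s (c + unary_count L + of_bool (nchildren (Node L a R) = 1)) R"

lemma tilde_ok_iff:
  "distinct (inorder T) \<Longrightarrow>
    tilde_ok s c T \<longleftrightarrow> (\<forall>t\<in>tnodes T. tilde_node s t (c + oc_rank T (root_label t)))"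
proof (induction T arbitrary: c)
  case (Node L a R)
  let ?T = "Node L a R" and ?Q = "\<lambda>t. tilde_node s t (c + oc_rank (Node L a R) (root_label t))"
  let ?c = "c + unary_count L + of_bool (nchildren ?T = 1)"
  have dL: "distinct (inorder L)" and dR: "distinct (inorder R)" using Node.prems by auto
  note rank = oc_rank_Node[OF Node.prems]
  have "oc_rank ?T (root_label t) = oc_rank L (root_label t)" if "t \<in> tnodes L" for t
    using rank[of "root_label t"] root_label_in_set_tree[OF that] by simp
  then have "(\<forall>t\<in>tnodes L. ?Q t) \<longleftrightarrow> tilde_ok s c L"
    unfolding Node.IH(1)[OF dL] by (intro ball_cong) auto
  moreover have "oc_rank ?T (root_label t) = unary_count L + of_bool (nchildren ?T = 1) +
      oc_rank R (root_label t)" if "t \<in> tnodes R" for t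
    using rank[of "root_label t"] root_label_in_set_tree[OF that] Node.prems by auto
  then have "(\<forall>t\<in>tnodes R. ?Q t) \<longleftrightarrow> tilde_ok s ?c R"
    unfolding Node.IH(2)[OF dR] by (intro ball_cong) (auto simp: add.assoc)
  moreover have "?Q ?T \<longleftrightarrow> tilde_node s ?T (c + unary_count L + 1)"
    using rank[of a] Node.prems by simp
  ultimately show ?case by (simp only: tilde_ok.simps tnodes.simps ball_simps ball_Un)
qed simp

lemma card_interior:
  assumes "finite V" "card V \<ge> 2"
  shows "card (V - {Min V, Max V}) = card V - 2"
proof -
  have "Min V \<in> V" "Max V \<in> V" using assms by (auto intro: Min_in Max_in)
  then show ?thesis using assms Min_ne_Max[OF assms] by (simp add: card_Diff_subset)
qed

lemma card_extreme_split:
  assumes V: "finite V" "card V \<ge> 2" and A: "A \<subseteq> V - {Min V, Max V}"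
  shows "card (V - {extreme V b} - A) = card V - 1 - card A"
proof -
  have fA: "finite A" using finite_subset[OF A] V(1) by blast
  have "extreme V b \<in> V" using V by (intro extreme_in) auto
  moreover have "extreme V b \<notin> A" using A by (auto simp: extreme_def)
  ultimately have e: "extreme V b \<in> V" "extreme V b \<notin> A" .
  then have "card (V - insert (extreme V b) A) = card V - card (insert (extreme V b) A)"
    using A fA by (intro card_Diff_subset) auto
  moreover have "V - {extreme V b} - A = V - insert (extreme V b) A" by blast
  ultimately show ?thesis using e fA by simp
qed

lemma card_extreme_split_eq:
  assumes V: "finite V" "card V \<ge> 2" "card V = card A + k + 1" and A: "A \<subseteq> V - {Min V, Max V}"
  shows "card (V - {extreme V b} - A) = k"
  using card_extreme_split[OF V(1,2) A, of b] V(3) by simp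

lemma sum_Pow_card_eq:
  assumes "finite X"
  shows "(\<Sum>A\<in>Pow X. if card A = k then c else 0) = of_nat (card X choose k) * (c :: 'b::semiring_1)"
proof -
  have "(\<Sum>A\<in>Pow X. if card A = k then c else 0) = (\<Sum>A\<in>{A. A \<subseteq> X \<and> card A = k}. c)"
    using assms by (simp add: sum.inter_filter[symmetric] Pow_def conj_commute)
  then show ?thesis using n_subsets[OF assms] by simp
qed

lemma shape_sum_Leaf_Node_factor:
  fixes F :: "'a::linorder list \<Rightarrow> 'b::comm_semiring_1"
  assumes V: "finite V" "card V \<ge> 2"
    and F: "\<And>b r. r \<in> permutations_of_set (V - {extreme V b}) \<Longrightarrow> shape r = R \<Longrightarrow>
        F (extreme V b # r) = g b * H b r"
    and H: "\<And>b. shape_sum (V - {extreme V b}) R (H b) = K"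
  shows "shape_sum V (Node Leaf () R) F = (\<Sum>b\<in>UNIV. g b) * K"
proof -
  have "shape_sum V (Node Leaf () R) F = (\<Sum>b\<in>UNIV. g b * shape_sum (V - {extreme V b}) R (H b))"
    unfolding shape_sum_Leaf_Node[OF V] shape_sum_mult[symmetric] using F by (intro sum.cong shape_sum_cong) auto
  then show ?thesis by (simp add: H sum_distrib_right)
qed

lemma shape_sum_Node_factor:
  fixes F :: "'a::linorder list \<Rightarrow> 'b::comm_semiring_1"
  assumes V: "finite V" "card V \<ge> 2" "card V = size L + size R + 1"
    and F: "\<And>b A l r. A \<subseteq> V - {Min V, Max V} \<Longrightarrow> l \<in> permutations_of_set A \<Longrightarrow>
        r \<in> permutations_of_set (V - {extreme V b} - A) \<Longrightarrow> shape l = L \<Longrightarrow> shape r = R \<Longrightarrow>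
        F (l @ extreme V b # r) = G b l * H b r"
    and H: "\<And>b A. A \<subseteq> V - {Min V, Max V} \<Longrightarrow> card A = size L \<Longrightarrow>
        shape_sum (V - {extreme V b} - A) R (H b) = K"
  shows "shape_sum V (Node L () R) F =
    K * (\<Sum>A\<in>Pow (V - {Min V, Max V}). shape_sum A L (\<lambda>l. \<Sum>b\<in>UNIV. G b l))"
proof -
  have "shape_sum A L (\<lambda>l. shape_sum (V - {extreme V b} - A) R (\<lambda>r. F (l @ extreme V b # r))) =
      shape_sum A L (G b) * K" if A: "A \<subseteq> V - {Min V, Max V}" for b A
  proof (cases "card A = size L")
    case True
    have "shape_sum A L (\<lambda>l. shape_sum (V - {extreme V b} - A) R (\<lambda>r. F (l @ extreme V b # r))) =
        shape_sum A L (\<lambda>l. G b l * shape_sum (V - {extreme V b} - A) R (H b))"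
    proof (intro shape_sum_cong)
      fix l assume "l \<in> permutations_of_set A" "shape l = L"
      then show "shape_sum (V - {extreme V b} - A) R (\<lambda>r. F (l @ extreme V b # r)) =
          G b l * shape_sum (V - {extreme V b} - A) R (H b)"
        unfolding shape_sum_mult[symmetric] using F[OF A] by (intro shape_sum_cong) auto
    qed
    then show ?thesis using H[OF A True] by (simp add: shape_sum_mult[symmetric] mult.commute)
  qed (simp add: shape_sum_eq_0)
  then have "shape_sum V (Node L () R) F =
      (\<Sum>b\<in>UNIV. \<Sum>A\<in>Pow (V - {Min V, Max V}). shape_sum A L (G b) * K)"
    unfolding shape_sum_Node[OF V(1,2)] by (intro sum.cong) auto
  also have "\<dots> = K * (\<Sum>A\<in>Pow (V - {Min V, Max V}). \<Sum>b\<in>UNIV. shape_sum A L (G b))"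
    by (subst sum.swap) (simp add: sum_distrib_left sum_distrib_right mult.commute)
  finally show ?thesis by (simp add: shape_sum_sum)
qed

lemma shape_sum_Node_labelings:
  fixes F :: "'a::linorder list \<Rightarrow> 'b::comm_semiring_1"
  assumes V: "finite V" "card V \<ge> 2" "card V = size L + size R + 1"
    and F: "\<And>b A l r. A \<subseteq> V - {Min V, Max V} \<Longrightarrow> l \<in> permutations_of_set A \<Longrightarrow>
        r \<in> permutations_of_set (V - {extreme V b} - A) \<Longrightarrow> shape l = L \<Longrightarrow> shape r = R \<Longrightarrow>
        F (l @ extreme V b # r) = G b l * H b r"
    and H: "\<And>b A. A \<subseteq> V - {Min V, Max V} \<Longrightarrow> card A = size L \<Longrightarrow>
        shape_sum (V - {extreme V b} - A) R (H b) = K"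
    and G: "\<And>A. A \<subseteq> V - {Min V, Max V} \<Longrightarrow> card A = size L \<Longrightarrow>
        shape_sum A L (\<lambda>l. \<Sum>b\<in>UNIV. G b l) = K'"
  shows "shape_sum V (Node L () R) F = of_nat (size L + size R - 1 choose size L) * K * K'"
proof -
  have "shape_sum V (Node L () R) F =
      K * (\<Sum>A\<in>Pow (V - {Min V, Max V}). shape_sum A L (\<lambda>l. \<Sum>b\<in>UNIV. G b l))"
    by (rule shape_sum_Node_factor[OF V F H])
  also have "\<dots> = K * (\<Sum>A\<in>Pow (V - {Min V, Max V}). if card A = size L then K' else 0)"
    using G by (intro arg_cong[where f = "\<lambda>y. K * y"] sum.cong) (auto simp: shape_sum_eq_0)
  finally show ?thesis using V card_interior[OF V(1,2)] by (simp add: sum_Pow_card_eq mult_ac)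
qed

lemma shape_sum_Node_sum:
  fixes F :: "'a::linorder list \<Rightarrow> 'b::comm_semiring_1"
  assumes V: "finite V" "card V \<ge> 2" "card V = size L + size R + 1"
    and F: "\<And>b A l r. A \<subseteq> V - {Min V, Max V} \<Longrightarrow> l \<in> permutations_of_set A \<Longrightarrow>
        r \<in> permutations_of_set (V - {extreme V b} - A) \<Longrightarrow> shape l = L \<Longrightarrow> shape r = R \<Longrightarrow>
        F (l @ extreme V b # r) = G b l * H b r"
    and H: "\<And>b A. A \<subseteq> V - {Min V, Max V} \<Longrightarrow> card A = size L \<Longrightarrow>
        shape_sum (V - {extreme V b} - A) R (H b) = K"
    and G: "\<And>A. A \<subseteq> V - {Min V, Max V} \<Longrightarrow> shape_sum A L (\<lambda>l. \<Sum>b\<in>UNIV. G b l) = of_nat (g A) * K'"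
  shows "shape_sum V (Node L () R) F = of_nat (\<Sum>A\<in>Pow (V - {Min V, Max V}). g A) * K * K'"
proof -
  have "shape_sum V (Node L () R) F =
      K * (\<Sum>A\<in>Pow (V - {Min V, Max V}). shape_sum A L (\<lambda>l. \<Sum>b\<in>UNIV. G b l))"
    by (rule shape_sum_Node_factor[OF V F H])
  also have "\<dots> = K * (\<Sum>A\<in>Pow (V - {Min V, Max V}). of_nat (g A) * K')"
    using G by (intro arg_cong[where f = "\<lambda>y. K * y"] sum.cong) auto
  also have "\<dots> = of_nat (\<Sum>A\<in>Pow (V - {Min V, Max V}). g A) * K * K'"
    by (simp only: of_nat_sum sum_distrib_left sum_distrib_right mult_ac)
  finally show ?thesis .
qed

lemma shape_induct [consumes 3, case_names single right_empty left_empty binary]: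
  assumes "finite V" "card V = size S" "S \<noteq> Leaf"
    and single: "\<And>v. P {v} (Node Leaf () Leaf)"
    and right_empty: "\<And>V L. finite V \<Longrightarrow> card V \<ge> 2 \<Longrightarrow> card V = size L + 1 \<Longrightarrow> L \<noteq> Leaf \<Longrightarrow>
        P V (Node L () Leaf)"
    and left_empty: "\<And>V R. finite V \<Longrightarrow> card V \<ge> 2 \<Longrightarrow> card V = size R + 1 \<Longrightarrow> R \<noteq> Leaf \<Longrightarrow>
        (\<And>W. finite W \<Longrightarrow> card W = size R \<Longrightarrow> P W R) \<Longrightarrow> P V (Node Leaf () R)"
    and binary: "\<And>V L R. finite V \<Longrightarrow> card V \<ge> 2 \<Longrightarrow> card V = size L + size R + 1 \<Longrightarrow>
        L \<noteq> Leaf \<Longrightarrow> R \<noteq> Leaf \<Longrightarrow> (\<And>W. finite W \<Longrightarrow> card W = size L \<Longrightarrow> P W L) \<Longrightarrow>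
        (\<And>W. finite W \<Longrightarrow> card W = size R \<Longrightarrow> P W R) \<Longrightarrow> P V (Node L () R)"
  shows "P V S"
  using assms(1-3)
proof (induction S arbitrary: V)
  case (Node L u R)
  then have V: "finite V" "card V = size L + size R + 1" by auto
  consider "L = Leaf" "R = Leaf" | "L = Leaf" "R \<noteq> Leaf" | "L \<noteq> Leaf" "R = Leaf"
    | "L \<noteq> Leaf" "R \<noteq> Leaf" by blast
  then show ?case
  proof cases
    case 1
    then obtain v where "V = {v}" using V card_1_singletonE by auto
    then show ?thesis using 1 single by simp
  next
    case 2
    then show ?thesis using V Node.IH(2) left_empty[of V R] by (cases R) auto
  next
    case 3
    then show ?thesis using V right_empty[of V L] by (cases L) auto
  next
    case 4
    then show ?thesis using V Node.IH binary[of V L R] by (cases L; cases R) auto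
  qed
qed simp

lemma extreme_split_tree:
  assumes V: "finite V" "card V \<ge> 2" and A: "A \<subseteq> V - {Min V, Max V}"
    and l: "l \<in> permutations_of_set A"
    and r: "r \<in> permutations_of_set (V - {extreme V b} - A)"
  shows "hr_of (l @ extreme V b # r) = Node (hr_of l) (extreme V b) (hr_of r)"
    and "nchildren (hr_of (l @ extreme V b # r)) = (if l = [] then 1 else 2)"
    and "extreme_node s (hr_of (l @ extreme V b # r)) \<longleftrightarrow> b = s"
proof -
  note split = extreme_split[OF V A l r]
  show hr: "hr_of (l @ extreme V b # r) = Node (hr_of l) (extreme V b) (hr_of r)"
    by (rule hr_of_root_split[OF split(2)])
  then show "nchildren (hr_of (l @ extreme V b # r)) = (if l = [] then 1 else 2)"
    using split(3) by simp
  have "set_tree (hr_of (l @ extreme V b # r)) = V" using permutations_of_setD(1)[OF split(1)] by simp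
  moreover have "is_inner (hr_of (l @ extreme V b # r))" using hr split(3) by (simp add: is_inner_def)
  ultimately show "extreme_node s (hr_of (l @ extreme V b # r)) \<longleftrightarrow> b = s"
    using hr Min_ne_Max[OF V]
    by (auto simp: extreme_node_def is_max_node_def is_min_node_def extreme_def)
qed

section \<open>Closed forms for the sums over the words of a shape\<close>

text \<open>The number of words of shape \<open>S\<close> on a given set of letters, once it is fixed at every
  inner node whether its label is the minimum or the maximum of its subtree.\<close>

fun labelings :: "unit tree \<Rightarrow> nat" where
  "labelings Leaf = 1"
| "labelings (Node L u R) = (size L + size R - 1 choose size L) * labelings L * labelings R"

lemma labelings_Node_Leaf: "L \<noteq> Leaf \<Longrightarrow> labelings (Node L u Leaf) = 0"
  by (cases L) (simp_all add: binomial_eq_0)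

definition outside :: "'a::linorder \<Rightarrow> 'a set \<Rightarrow> bool" where
  "outside p V \<longleftrightarrow> (\<forall>v\<in>V. v < p) \<or> (\<forall>v\<in>V. p < v)"

lemma outside_mono: "outside p V \<Longrightarrow> W \<subseteq> V \<Longrightarrow> outside p W"
  unfolding outside_def by blast

lemma outside_extreme: "finite V \<Longrightarrow> outside (extreme V b) (V - {extreme V b})"
  unfolding outside_def extreme_def by (auto simp: order.strict_iff_order)

lemma sum_turn_outside:
  fixes x :: "'b::comm_semiring_1"
  assumes "finite V" "card V \<ge> 2" "outside p V"
  shows "(\<Sum>b\<in>UNIV. x ^ of_bool (p < extreme V b \<longleftrightarrow> b)) = 1 + x"
proof -
  have "Min V \<in> V" "Max V \<in> V" using assms(1,2) by (auto intro: Min_in Max_in)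
  then show ?thesis using assms(3) unfolding outside_def extreme_def UNIV_bool
    by (auto simp: add.commute)
qed

lemma turns_extreme_Cons:
  assumes V: "finite V" "card V \<ge> 2" and r: "r \<in> permutations_of_set (V - {extreme V b})"
    and p: "outside p V"
  shows "turns (Some p) (extreme V b # r) c = of_bool (p < extreme V b \<longleftrightarrow> b) + turns (Some (extreme V b)) r c"
proof -
  have r': "r \<in> permutations_of_set (V - {extreme V b} - {})" using r by simp
  have "hd r \<in> set r" using extreme_split(3)[OF V _ _ r'] by simp
  then have "if b then hd r < extreme V b else extreme V b < hd r"
    using extreme_split(4)[OF V _ _ r', of "[]" "hd r"] by simp
  moreover have "p \<noteq> extreme V b" using p extreme_in[OF V(1)] V(2) unfolding outside_def by fastforce
  ultimately have "turn (Some p) (extreme V b) (Some (hd r)) \<longleftrightarrow> (p < extreme V b \<longleftrightarrow> b)"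
    by (rule turn_extreme)
  then show ?thesis using turns_extreme_split[OF V _ _ r', of "[]" "Some p" c] by simp
qed

lemma sum_turns_extreme_neighbours:
  fixes x :: "'b::comm_semiring_1"
  assumes V: "finite V" "card V \<ge> 2" and A: "A \<subseteq> V - {Min V, Max V}"
    and l: "l \<in> permutations_of_set A" "l \<noteq> []"
    and a: "case a of None \<Rightarrow> length l \<ge> 2 | Some p \<Rightarrow> p \<notin> set l"
  shows "(\<Sum>b\<in>UNIV. x ^ turns a l (Some (extreme V b))) = (1 + x) * x ^ turns a l None"
proof -
  have "\<forall>v\<in>set l. Min V < v \<and> v < Max V"
    using A permutations_of_setD(1)[OF l(1)] V(1) by (force simp: order.strict_iff_order)
  then have "x ^ turns a l (Some (Max V)) + x ^ turns a l (Some (Min V)) = (1 + x) * x ^ turns a l None"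
    by (rule turns_last_neighbours[OF permutations_of_setD(2)[OF l(1)] l(2) _ a])
  then show ?thesis by (simp add: UNIV_bool extreme_def add.commute)
qed

lemma shape_sum_turns_outside:
  fixes x :: "'b::comm_semiring_1"
  assumes "finite V" "card V = size S" "S \<noteq> Leaf" "outside p V"
  shows "shape_sum V S (\<lambda>w. x ^ turns (Some p) w None) =
    of_nat (labelings S) * x ^ binary_count S * (1 + x) ^ (unary_count S + binary_count S)"
  using assms
proof (induction V S arbitrary: p rule: shape_induct)
  case (single v)
  then show ?case by (simp add: shape_sum_singleton)
next
  case (right_empty V L)
  then show ?case
    using labelings_Node_Leaf[of L] by (simp add: shape_sum_Node_Leaf del: labelings.simps)
next
  case (left_empty V R)
  let ?K = "of_nat (labelings R) * x ^ binary_count R * (1 + x) ^ (unary_count R + binary_count R)"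
  have "shape_sum V (Node Leaf () R) (\<lambda>w. x ^ turns (Some p) w None) =
      (\<Sum>b\<in>UNIV. x ^ of_bool (p < extreme V b \<longleftrightarrow> b)) * ?K"
  proof (rule shape_sum_Leaf_Node_factor[OF left_empty(1,2)])
    fix b r assume "r \<in> permutations_of_set (V - {extreme V b})"
    then show "x ^ turns (Some p) (extreme V b # r) None =
        x ^ of_bool (p < extreme V b \<longleftrightarrow> b) * x ^ turns (Some (extreme V b)) r None"
      using turns_extreme_Cons[OF left_empty(1,2) _ left_empty.prems] by (simp add: power_add)
  next
    fix b
    have "card (V - {extreme V b} - {}) = size R"
      using left_empty(1-3) by (intro card_extreme_split_eq) auto
    then show "shape_sum (V - {extreme V b}) R (\<lambda>r. x ^ turns (Some (extreme V b)) r None) = ?K"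
      using left_empty.IH left_empty(1) outside_extreme[OF left_empty(1)] by simp
  qed
  also have "\<dots> = (1 + x) * ?K" by (simp only: sum_turn_outside[OF left_empty(1,2) left_empty.prems])
  finally show ?case using left_empty(4) by (simp add: mult_ac)
next
  case (binary V L R)
  let ?X = "V - {Min V, Max V}"
  let ?K = "\<lambda>S. of_nat (labelings S) * x ^ binary_count S * (1 + x) ^ (unary_count S + binary_count S)"
  have "shape_sum V (Node L () R) (\<lambda>w. x ^ turns (Some p) w None) =
      of_nat (size L + size R - 1 choose size L) * (x * ?K R) * ((1 + x) * ?K L)"
  proof (rule shape_sum_Node_labelings[OF binary(1-3)])
    fix b A l r
    assume A: "A \<subseteq> ?X" and l: "l \<in> permutations_of_set A"
      and r: "r \<in> permutations_of_set (V - {extreme V b} - A)" and "shape l = L"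
    then have "l \<noteq> []" using binary(4) by auto
    then show "x ^ turns (Some p) (l @ extreme V b # r) None =
        x ^ turns (Some p) l (Some (extreme V b)) * (x * x ^ turns (Some (extreme V b)) r None)"
      using turns_extreme_split[OF binary(1,2) A l r, of "Some p" None] by (simp add: power_add mult_ac)
  next
    fix b A assume A: "A \<subseteq> ?X" "card A = size L"
    then have "card (V - {extreme V b} - A) = size R"
      using binary(1-3) by (intro card_extreme_split_eq) auto
    moreover have "outside (extreme V b) (V - {extreme V b} - A)"
      by (rule outside_mono[OF outside_extreme[OF binary(1)]]) blast
    ultimately show "shape_sum (V - {extreme V b} - A) R (\<lambda>r. x * x ^ turns (Some (extreme V b)) r None) =
        x * ?K R"
      using binary.IH(2) binary(1) by (simp add: shape_sum_mult)
  next
    fix A assume A: "A \<subseteq> ?X" "card A = size L"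
    then have fA: "finite A" and out: "outside p A"
      using binary(1) outside_mono[OF binary.prems, of A] finite_subset[of A V] by auto
    have "shape_sum A L (\<lambda>l. \<Sum>b\<in>UNIV. x ^ turns (Some p) l (Some (extreme V b))) =
        (1 + x) * shape_sum A L (\<lambda>l. x ^ turns (Some p) l None)"
      unfolding shape_sum_mult[symmetric]
    proof (intro shape_sum_cong)
      fix l assume l: "l \<in> permutations_of_set A" "shape l = L"
      then have "l \<noteq> []" "p \<notin> set l"
        using binary(4) out permutations_of_setD(1)[OF l(1)] unfolding outside_def by auto
      then show "(\<Sum>b\<in>UNIV. x ^ turns (Some p) l (Some (extreme V b))) = (1 + x) * x ^ turns (Some p) l None"
        using sum_turns_extreme_neighbours[OF binary(1,2) A(1) l(1), of "Some p"] by simp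
    qed
    then show "shape_sum A L (\<lambda>l. \<Sum>b\<in>UNIV. x ^ turns (Some p) l (Some (extreme V b))) = (1 + x) * ?K L"
      using binary.IH(1)[OF fA A(2) out] by simp
  qed
  then show ?case using binary(4,5) by (simp add: power_add mult_ac)
qed

fun evens :: "nat \<Rightarrow> nat \<Rightarrow> nat" where
  "evens c 0 = 0"
| "evens c (Suc k) = of_bool (even (Suc c)) + evens (Suc c) k"

lemma evens_add: "evens c (a + b) = evens c a + evens (c + a) b"
  by (induction a arbitrary: c) (auto simp: add.assoc)

lemma evens_0: "evens 0 k = k div 2"
proof -
  have "evens c k = (if even c then k div 2 else (k + 1) div 2)" for c
    by (induction k arbitrary: c) auto
  then show ?thesis by simp
qed

lemma count_nchildren_hr_of:
  "count_nodes (\<lambda>s. nchildren s = k) (hr_of w) = count_nodes (\<lambda>s. nchildren s = k) (shape w)"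
  by (simp add: shape_def)

lemma extreme_node_leaf [simp]: "\<not> extreme_node s (Node Leaf v Leaf)"
  and tilde_node_leaf [simp]: "tilde_node s (Node Leaf v Leaf) k"
  by (simp_all add: tilde_node_def extreme_node_def is_max_node_def is_min_node_def is_inner_def)

lemma shape_sum_tilde:
  fixes x :: "'b::comm_semiring_1"
  assumes "finite V" "card V = size S" "S \<noteq> Leaf"
  shows "shape_sum V S (\<lambda>w. if tilde_ok s c (hr_of w) then x ^ count_nodes (extreme_node s) (hr_of w) else 0) =
    of_nat (labelings S) * x ^ binary_count S * (1 + x) ^ evens c (unary_count S)"
  using assms
proof (induction V S arbitrary: c rule: shape_induct)
  case (single v)
  then show ?case by (simp add: shape_sum_singleton)
next
  case (right_empty V L)
  then show ?case
    using labelings_Node_Leaf[of L] by (simp add: shape_sum_Node_Leaf del: labelings.simps)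
next
  case (left_empty V R)
  let ?F = "\<lambda>c w. if tilde_ok s c (hr_of w) then x ^ count_nodes (extreme_node s) (hr_of w) else 0"
  have "shape_sum V (Node Leaf () R) (?F c) =
      (\<Sum>b\<in>UNIV. if b = s \<longrightarrow> even (c + 1) then x ^ of_bool (b = s) else 0) *
      (of_nat (labelings R) * x ^ binary_count R * (1 + x) ^ evens (c + 1) (unary_count R))"
  proof (rule shape_sum_Leaf_Node_factor[OF left_empty(1,2)])
    fix b r assume "r \<in> permutations_of_set (V - {extreme V b})"
    then have r: "r \<in> permutations_of_set (V - {extreme V b} - {})" by simp
    show "?F c (extreme V b # r) =
        (if b = s \<longrightarrow> even (c + 1) then x ^ of_bool (b = s) else 0) * ?F (c + 1) r"
      using extreme_split_tree[OF left_empty(1,2) _ _ r, of "[]", simplified]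
      by (simp add: tilde_node_def power_add)
  next
    fix b
    have "card (V - {extreme V b} - {}) = size R"
      using left_empty(1-3) by (intro card_extreme_split_eq) auto
    then show "shape_sum (V - {extreme V b}) R (?F (c + 1)) =
        of_nat (labelings R) * x ^ binary_count R * (1 + x) ^ evens (c + 1) (unary_count R)"
      using left_empty.IH left_empty(1) by simp
  qed
  then show ?case using left_empty(4) by (simp add: UNIV_bool algebra_simps)
next
  case (binary V L R)
  let ?F = "\<lambda>c w. if tilde_ok s c (hr_of w) then x ^ count_nodes (extreme_node s) (hr_of w) else 0"
  let ?K = "\<lambda>c S. of_nat (labelings S) * x ^ binary_count S * (1 + x) ^ evens c (unary_count S)"
  have "shape_sum V (Node L () R) (?F c) =
      of_nat (size L + size R - 1 choose size L) * (x * ?K (c + unary_count L) R) * ?K c L"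
  proof (rule shape_sum_Node_labelings[OF binary(1-3)])
    fix b A l r
    assume A: "A \<subseteq> V - {Min V, Max V}" and l: "l \<in> permutations_of_set A"
      and r: "r \<in> permutations_of_set (V - {extreme V b} - A)" and "shape l = L"
    then have "l \<noteq> []" "unary_count (hr_of l) = unary_count L"
      using binary(4) by (auto simp: count_nchildren_hr_of)
    then show "?F c (l @ extreme V b # r) = (if b = s then ?F c l else 0) * (x * ?F (c + unary_count L) r)"
      using extreme_split_tree(2)[OF binary(1,2) A l r] extreme_split_tree(3)[OF binary(1,2) A l r, of s]
      unfolding extreme_split_tree(1)[OF binary(1,2) A l r]
      by (cases "b = s") (simp_all add: tilde_node_def power_add mult_ac)
  next
    fix b A assume A: "A \<subseteq> V - {Min V, Max V}" "card A = size L"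
    then have "card (V - {extreme V b} - A) = size R"
      using binary(1-3) by (intro card_extreme_split_eq) auto
    then show "shape_sum (V - {extreme V b} - A) R (\<lambda>r. x * ?F (c + unary_count L) r) =
        x * ?K (c + unary_count L) R"
      using binary(1) binary.IH(2) by (simp add: shape_sum_mult)
  next
    fix A assume A: "A \<subseteq> V - {Min V, Max V}" "card A = size L"
    then have "finite A" using binary(1) finite_subset[of A V] by auto
    then show "shape_sum A L (\<lambda>l. \<Sum>b\<in>UNIV. if b = s then ?F c l else 0) = ?K c L"
      using binary.IH(1)[OF _ A(2)] by (simp add: UNIV_bool)
  qed
  then show ?case using binary(4,5) by (simp add: evens_add power_add mult_ac)
qed

text \<open>The number of words of shape \<open>S\<close> on \<open>V\<close> that begin with \<open>f\<close>, counted as in \<open>labelings\<close>;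
  when the first letter is a one-child node it has to be the \<open>\<not> s\<close>-extremum of its subtree.\<close>

fun first_labelings :: "bool \<Rightarrow> 'a::linorder \<Rightarrow> 'a set \<Rightarrow> unit tree \<Rightarrow> nat" where
  "first_labelings s f V Leaf = 0"
| "first_labelings s f V (Node L u R) =
    (if card V \<noteq> size L + size R + 1 then 0
     else if L = Leaf then
       (if R = Leaf then of_bool (V = {f}) else of_bool (extreme V (\<not> s) = f) * labelings R)
     else if R = Leaf then 0
     else (\<Sum>A\<in>Pow (V - {Min V, Max V}). first_labelings s f A L) * labelings R)"

lemma first_labelings_eq_0: "card V \<noteq> size S \<Longrightarrow> first_labelings s f V S = 0"
  by (cases S) auto

lemma sum_extreme_first: "(\<Sum>b\<in>UNIV. of_bool (extreme V b = f \<and> b \<noteq> s) :: 'b::semiring_1) =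
    of_bool (extreme V (\<not> s) = f)"
  by (cases s) (simp_all add: UNIV_bool)

lemma shape_sum_tilde_first:
  fixes x :: "'b::comm_semiring_1"
  assumes "finite V" "card V = size S" "S \<noteq> Leaf"
  shows "shape_sum V S
      (\<lambda>w. if hd w = f \<and> tilde_ok s 0 (hr_of w) then x ^ count_nodes (extreme_node s) (hr_of w) else 0) =
    of_nat (first_labelings s f V S) * x ^ binary_count S * (1 + x) ^ evens 0 (unary_count S)"
  using assms
proof (induction V S rule: shape_induct)
  case (single v)
  then show ?case by (simp add: shape_sum_singleton)
next
  case (right_empty V L)
  then show ?case by (simp add: shape_sum_Node_Leaf)
next
  case (left_empty V R)
  let ?F = "\<lambda>w. if tilde_ok s 1 (hr_of w) then x ^ count_nodes (extreme_node s) (hr_of w) else 0"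
  let ?G = "\<lambda>w. if hd w = f \<and> tilde_ok s 0 (hr_of w) then x ^ count_nodes (extreme_node s) (hr_of w) else 0"
  let ?K = "of_nat (labelings R) * x ^ binary_count R * (1 + x) ^ evens 1 (unary_count R)"
  have "shape_sum V (Node Leaf () R) ?G = (\<Sum>b\<in>UNIV. of_bool (extreme V b = f \<and> b \<noteq> s)) * ?K"
  proof (rule shape_sum_Leaf_Node_factor[OF left_empty(1,2)])
    fix b r assume "r \<in> permutations_of_set (V - {extreme V b})"
    then have r: "r \<in> permutations_of_set (V - {extreme V b} - {})" by simp
    have hr: "hr_of (extreme V b # r) = Node Leaf (extreme V b) (hr_of r)"
      using extreme_split_tree(1)[OF left_empty(1,2) _ _ r, of "[]"] by simp
    have ext: "extreme_node s (Node Leaf (extreme V b) (hr_of r)) \<longleftrightarrow> b = s"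
      using extreme_split_tree(3)[OF left_empty(1,2) _ _ r, of "[]" s] hr by simp
    have "hr_of r \<noteq> Leaf" using extreme_split(3)[OF left_empty(1,2) _ _ r, of "[]"] by simp
    then show "?G (extreme V b # r) = of_bool (extreme V b = f \<and> b \<noteq> s) * ?F r"
      unfolding hr tilde_ok.simps tilde_node_def count_nodes.simps ext
      by (cases "b = s") simp_all
  next
    fix b
    have "card (V - {extreme V b} - {}) = size R"
      using left_empty(1-3) by (intro card_extreme_split_eq) auto
    then show "shape_sum (V - {extreme V b}) R ?F = ?K"
      using shape_sum_tilde[OF finite_Diff[OF left_empty(1)] _ left_empty(4), where s = s and c = 1 and x = x]
      by simp
  qed
  also have "\<dots> = of_bool (extreme V (\<not> s) = f) * ?K" by (simp only: sum_extreme_first)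
  finally show ?case using left_empty(3,4) by (simp add: mult_ac)
next
  case (binary V L R)
  let ?F = "\<lambda>w. if tilde_ok s (unary_count L) (hr_of w) then x ^ count_nodes (extreme_node s) (hr_of w) else 0"
  let ?G = "\<lambda>w. if hd w = f \<and> tilde_ok s 0 (hr_of w) then x ^ count_nodes (extreme_node s) (hr_of w) else 0"
  let ?K = "of_nat (labelings R) * x ^ binary_count R * (1 + x) ^ evens (unary_count L) (unary_count R)"
  have "shape_sum V (Node L () R) ?G = of_nat (\<Sum>A\<in>Pow (V - {Min V, Max V}). first_labelings s f A L) *
      (x * ?K) * (x ^ binary_count L * (1 + x) ^ evens 0 (unary_count L))"
  proof (rule shape_sum_Node_sum[OF binary(1-3)])
    fix b A l r
    assume A: "A \<subseteq> V - {Min V, Max V}" and l: "l \<in> permutations_of_set A"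
      and r: "r \<in> permutations_of_set (V - {extreme V b} - A)" and "shape l = L"
    then have "l \<noteq> []" "unary_count (hr_of l) = unary_count L"
      using binary(4) by (auto simp: count_nchildren_hr_of)
    then show "?G (l @ extreme V b # r) = (if b = s then ?G l else 0) * (x * ?F r)"
      using extreme_split_tree(2)[OF binary(1,2) A l r] extreme_split_tree(3)[OF binary(1,2) A l r, of s]
      unfolding extreme_split_tree(1)[OF binary(1,2) A l r]
      by (cases "b = s") (simp_all add: tilde_node_def power_add mult_ac)
  next
    fix b A assume A: "A \<subseteq> V - {Min V, Max V}" "card A = size L"
    then have "card (V - {extreme V b} - A) = size R"
      using binary(1-3) by (intro card_extreme_split_eq) auto
    then show "shape_sum (V - {extreme V b} - A) R (\<lambda>r. x * ?F r) = x * ?K"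
      using shape_sum_tilde[OF finite_Diff[OF finite_Diff[OF binary(1)]] _ binary(5),
          where s = s and c = "unary_count L" and x = x]
      by (simp add: shape_sum_mult)
  next
    fix A assume "A \<subseteq> V - {Min V, Max V}"
    then have "finite A" using binary(1) finite_subset[of A V] by auto
    then show "shape_sum A L (\<lambda>l. \<Sum>b\<in>UNIV. if b = s then ?G l else 0) =
        of_nat (first_labelings s f A L) * (x ^ binary_count L * (1 + x) ^ evens 0 (unary_count L))"
      using binary.IH(1) by (cases "card A = size L")
        (simp_all add: shape_sum_eq_0 first_labelings_eq_0 UNIV_bool mult.assoc)
  qed
  then show ?case using binary(3-5) by (simp add: evens_add power_add mult_ac)
qed

definition starts_up :: "'a::linorder list \<Rightarrow> bool" where
  "starts_up w \<longleftrightarrow> w ! 0 < w ! 1"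

lemma starts_up_extreme_split:
  assumes V: "finite V" "card V \<ge> 2" and A: "A \<subseteq> V - {Min V, Max V}"
    and l: "l \<in> permutations_of_set A"
    and r: "r \<in> permutations_of_set (V - {extreme V b} - A)"
  shows "starts_up (l @ extreme V b # r) =
    (if l = [] then \<not> b else if length l = 1 then b else starts_up l)"
proof -
  note side = extreme_split(4)[OF V A l r]
  have "hd r \<in> set r" using extreme_split(3)[OF V A l r] by simp
  then have "extreme V b < hd r \<longleftrightarrow> \<not> b" using side[of "hd r"] by (cases b) auto
  moreover have "hd l < extreme V b \<longleftrightarrow> b" if "l \<noteq> []" using side[of "hd l"] that by (cases b) auto
  ultimately show ?thesis using extreme_split(3)[OF V A l r] unfolding starts_up_def
    by (cases l) (auto simp: nth_append hd_conv_nth)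
qed

lemma inner_count_pos: "size S \<ge> 2 \<Longrightarrow> unary_count S + binary_count S \<ge> 1"
  by (cases S) (auto split: if_splits)

text \<open>The left part \<open>l\<close> of a word cut at a two-child root \<open>extreme V b\<close>: summing over \<open>b\<close> gives
  the factor \<open>1 + x\<close> of a possible turn at the last letter of \<open>l\<close>, unless \<open>l\<close> has a single letter,
  whose direction is then decided by \<open>b\<close>.\<close>

lemma shape_sum_turns_first_left:
  fixes x :: "'b::comm_semiring_1"
  assumes V: "finite V" "card V \<ge> 2" and A: "A \<subseteq> V - {Min V, Max V}" and L: "L \<noteq> Leaf"
    and IH: "card A = size L \<Longrightarrow> 2 \<le> size L \<Longrightarrow>
      shape_sum A L (\<lambda>w. if hd w = f \<and> starts_up w = s then x ^ turns None w None else 0) =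
      of_nat (first_labelings s f A L) * x ^ binary_count L * (1 + x) ^ (unary_count L + binary_count L - 1)"
  shows "shape_sum A L (\<lambda>l. \<Sum>b\<in>UNIV. if hd l = f \<and> (if length l = 1 then b else starts_up l) = s
      then x ^ turns None l (Some (extreme V b)) else 0) =
    of_nat (first_labelings s f A L) * x ^ binary_count L * (1 + x) ^ (unary_count L + binary_count L)"
proof (cases "card A = size L")
  case True
  show ?thesis
  proof (cases "size L \<ge> 2")
    case False
    then have L1: "L = Node Leaf () Leaf" using L by (cases L) (auto simp: not_le)
    then have "card A = 1" using True by simp
    then obtain v where "A = {v}" by (rule card_1_singletonE)
    with L1 show ?thesis by (simp add: shape_sum_singleton UNIV_bool)
  next
    case long: True
    have eq: "shape_sum A L (\<lambda>l. \<Sum>b\<in>UNIV. if hd l = f \<and> (if length l = 1 then b else starts_up l) = s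
        then x ^ turns None l (Some (extreme V b)) else 0) =
      (1 + x) * shape_sum A L (\<lambda>w. if hd w = f \<and> starts_up w = s then x ^ turns None w None else 0)"
      unfolding shape_sum_mult[symmetric]
    proof (intro shape_sum_cong)
      fix l assume l: "l \<in> permutations_of_set A" "shape l = L"
      then have "length l \<ge> 2" using long by (metis size_shape)
      moreover from this have "l \<noteq> []" by auto
      ultimately show "(\<Sum>b\<in>UNIV. if hd l = f \<and> (if length l = 1 then b else starts_up l) = s
          then x ^ turns None l (Some (extreme V b)) else 0) =
        (1 + x) * (if hd l = f \<and> starts_up l = s then x ^ turns None l None else 0)"
        using sum_turns_extreme_neighbours[OF V A l(1) _, of None] by auto
    qed
    have "(1 + x) * (1 + x) ^ (n - 1) = (1 + x) ^ n" if "n \<ge> 1" for n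
      using that by (cases n) simp_all
    note pow = this[OF inner_count_pos[OF long]]
    show ?thesis unfolding eq IH[OF True long] pow[symmetric] by (simp only: mult_ac)
  qed
qed (simp add: shape_sum_eq_0 first_labelings_eq_0)

lemma shape_sum_turns_first:
  fixes x :: "'b::comm_semiring_1"
  assumes "finite V" "card V = size S" "size S \<ge> 2"
  shows "shape_sum V S (\<lambda>w. if hd w = f \<and> starts_up w = s then x ^ turns None w None else 0) =
    of_nat (first_labelings s f V S) * x ^ binary_count S * (1 + x) ^ (unary_count S + binary_count S - 1)"
proof -
  have "S \<noteq> Leaf" using assms(3) by auto
  with assms(1,2) show ?thesis using assms(3)
  proof (induction V S rule: shape_induct)
    case (single v)
    then show ?case by simp
  next
    case (right_empty V L)
    then show ?case by (simp add: shape_sum_Node_Leaf)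
  next
    case (left_empty V R)
    let ?G = "\<lambda>w. if hd w = f \<and> starts_up w = s then x ^ turns None w None else 0"
    let ?K = "of_nat (labelings R) * x ^ binary_count R * (1 + x) ^ (unary_count R + binary_count R)"
    have "shape_sum V (Node Leaf () R) ?G = (\<Sum>b\<in>UNIV. of_bool (extreme V b = f \<and> b \<noteq> s)) * ?K"
    proof (rule shape_sum_Leaf_Node_factor[OF left_empty(1,2)])
      fix b r assume "r \<in> permutations_of_set (V - {extreme V b})"
      then have r: "r \<in> permutations_of_set (V - {extreme V b} - {})" by simp
      show "?G (extreme V b # r) = of_bool (extreme V b = f \<and> b \<noteq> s) * x ^ turns (Some (extreme V b)) r None"
        using starts_up_extreme_split[OF left_empty(1,2) _ _ r, of "[]"]
          turns_extreme_split[OF left_empty(1,2) _ _ r, of "[]" None None] by auto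
    next
      fix b
      have "card (V - {extreme V b} - {}) = size R"
        using left_empty(1-3) by (intro card_extreme_split_eq) auto
      then show "shape_sum (V - {extreme V b}) R (\<lambda>r. x ^ turns (Some (extreme V b)) r None) = ?K"
        using shape_sum_turns_outside[OF finite_Diff[OF left_empty(1)] _ left_empty(4)
            outside_extreme[OF left_empty(1)], where x = x] by simp
    qed
    also have "\<dots> = of_bool (extreme V (\<not> s) = f) * ?K" by (simp only: sum_extreme_first)
    finally show ?case using left_empty(3,4) by (simp add: mult_ac)
  next
    case (binary V L R)
    let ?G = "\<lambda>w. if hd w = f \<and> starts_up w = s then x ^ turns None w None else 0"
    let ?H = "\<lambda>b l. if hd l = f \<and> (if length l = 1 then b else starts_up l) = s
      then x ^ turns None l (Some (extreme V b)) else 0"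
    let ?K = "of_nat (labelings R) * x ^ binary_count R * (1 + x) ^ (unary_count R + binary_count R)"
    have "shape_sum V (Node L () R) ?G = of_nat (\<Sum>A\<in>Pow (V - {Min V, Max V}). first_labelings s f A L) *
        (x * ?K) * (x ^ binary_count L * (1 + x) ^ (unary_count L + binary_count L))"
    proof (rule shape_sum_Node_sum[OF binary(1-3)])
      fix b A l r
      assume A: "A \<subseteq> V - {Min V, Max V}" and l: "l \<in> permutations_of_set A"
        and r: "r \<in> permutations_of_set (V - {extreme V b} - A)" and "shape l = L"
      then have "l \<noteq> []" using binary(4) by auto
      then show "?G (l @ extreme V b # r) = ?H b l * (x * x ^ turns (Some (extreme V b)) r None)"
        using starts_up_extreme_split[OF binary(1,2) A l r] turns_extreme_split[OF binary(1,2) A l r, of None None]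
        by (simp add: power_add mult_ac)
    next
      fix b A assume A: "A \<subseteq> V - {Min V, Max V}" "card A = size L"
      then have "card (V - {extreme V b} - A) = size R"
        using binary(1-3) by (intro card_extreme_split_eq) auto
      moreover have "outside (extreme V b) (V - {extreme V b} - A)"
        by (rule outside_mono[OF outside_extreme[OF binary(1)]]) blast
      ultimately show "shape_sum (V - {extreme V b} - A) R (\<lambda>r. x * x ^ turns (Some (extreme V b)) r None) =
          x * ?K"
        using shape_sum_turns_outside[OF finite_Diff[OF finite_Diff[OF binary(1)]] _ binary(5), where x = x]
        by (simp add: shape_sum_mult)
    next
      fix A assume A: "A \<subseteq> V - {Min V, Max V}"
      then have "finite A" using binary(1) finite_subset[of A V] by auto
      then show "shape_sum A L (\<lambda>l. \<Sum>b\<in>UNIV. ?H b l) = of_nat (first_labelings s f A L) *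
          (x ^ binary_count L * (1 + x) ^ (unary_count L + binary_count L))"
        using shape_sum_turns_first_left[OF binary(1,2) A binary(4) binary.IH(1)[OF \<open>finite A\<close>]]
        by (simp add: mult.assoc)
    qed
    then show ?case using binary(3-5) by (simp add: power_add mult_ac)
  qed
qed

section \<open>The two sides agree shape by shape\<close>

lemma root_split_right_nonempty:
  assumes "distinct w" "root_split w l a r" "l \<noteq> [] \<or> r \<noteq> []"
  shows "r \<noteq> []"
  using hr_node_root_split[OF assms(1,2)] assms(3) unfolding hr_node_def is_inner_def by auto

lemma length_eq_node_counts:
  "distinct w \<Longrightarrow> w \<noteq> [] \<Longrightarrow> length w = 2 * binary_count (hr_of w) + unary_count (hr_of w) + 1"
proof (induction w rule: hr_of_induct)
  case (split w l a r)
  have len: "length w = length l + 1 + length r" and d: "distinct l" "distinct r"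
    using split.hyps(1) split.prems(1) unfolding root_split_def by auto
  show ?case
  proof (cases "l = [] \<and> r = []")
    case False
    then have "r \<noteq> []" using root_split_right_nonempty[OF split.prems(1) split.hyps(1)] by blast
    then show ?thesis using split.IH d len
      unfolding hr_of_root_split[OF split.hyps(1)] by (cases "l = []") auto
  qed (simp add: len hr_of_root_split[OF split.hyps(1)])
qed simp

lemma size_shape_eq_node_counts:
  "distinct w \<Longrightarrow> w \<noteq> [] \<Longrightarrow> size (shape w) = 2 * binary_count (shape w) + unary_count (shape w) + 1"
  using length_eq_node_counts[of w] by (simp add: count_nchildren_hr_of)

lemma exponent_eq_half:
  fixes b u n :: nat
  assumes "n = 2 * b + u" "2 \<le> n"
  shows "u + b - 1 = (n - 1) div 2 + u div 2"
proof (cases u)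
  case 0
  then show ?thesis using assms by (cases b) auto
next
  case (Suc k)
  have "k div 2 + Suc k div 2 = k" by (cases "even k") (auto elim!: evenE oddE)
  then show ?thesis using assms Suc by simp
qed

lemma shape_sum_turns_eq_tilde:
  fixes x :: "'b::comm_semiring_1"
  assumes V: "finite V" "card V = size S" and S: "size S = 2 * binary_count S + unary_count S + 1"
    and n: "size S = n + 1" "n \<ge> 2"
  shows "shape_sum V S (\<lambda>w. if hd w = f \<and> starts_up w = s then x ^ turns None w None else 0) =
    (1 + x) ^ ((n - 1) div 2) * shape_sum V S
      (\<lambda>w. if hd w = f \<and> tilde_ok s 0 (hr_of w) then x ^ count_nodes (extreme_node s) (hr_of w) else 0)"
proof -
  let ?c = "of_nat (first_labelings s f V S) * x ^ binary_count S"
  have "shape_sum V S (\<lambda>w. if hd w = f \<and> starts_up w = s then x ^ turns None w None else 0) =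
      ?c * (1 + x) ^ (unary_count S + binary_count S - 1)"
    using n by (intro shape_sum_turns_first[OF V]) simp
  also have "unary_count S + binary_count S - 1 = (n - 1) div 2 + evens 0 (unary_count S)"
    unfolding evens_0 using S n by (intro exponent_eq_half) simp_all
  also have "?c * (1 + x) ^ ((n - 1) div 2 + evens 0 (unary_count S)) =
      (1 + x) ^ ((n - 1) div 2) * (?c * (1 + x) ^ evens 0 (unary_count S))"
    by (simp only: power_add mult_ac)
  also have "?c * (1 + x) ^ evens 0 (unary_count S) = shape_sum V S
      (\<lambda>w. if hd w = f \<and> tilde_ok s 0 (hr_of w) then x ^ count_nodes (extreme_node s) (hr_of w) else 0)"
    using n by (intro shape_sum_tilde_first[OF V, symmetric]) auto
  finally show ?thesis .
qed

lemma sum_eq_shape_sums: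
  "(\<Sum>w\<in>permutations_of_set V. F w) = (\<Sum>S\<in>shape ` permutations_of_set V. shape_sum V S F)"
  unfolding shape_sum_def
  by (subst sum.image_gen[OF finite_permutations_of_set]) (simp add: sum.inter_filter)

lemma sum_turns_eq_tilde:
  fixes x :: "'b::comm_semiring_1"
  assumes V: "finite V" "card V = n + 1" "n \<ge> 2"
  shows "(\<Sum>w\<in>permutations_of_set V. if hd w = f \<and> starts_up w = s then x ^ turns None w None else 0) =
    (1 + x) ^ ((n - 1) div 2) * (\<Sum>w\<in>permutations_of_set V.
      if hd w = f \<and> tilde_ok s 0 (hr_of w) then x ^ count_nodes (extreme_node s) (hr_of w) else 0)"
  unfolding sum_eq_shape_sums sum_distrib_left
proof (intro sum.cong refl)
  fix S assume "S \<in> shape ` permutations_of_set V"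
  then obtain w where w: "w \<in> permutations_of_set V" "S = shape w" by blast
  then have "length w = n + 1" "distinct w"
    using V(2) length_finite_permutations_of_set[OF w(1)] permutations_of_setD(2)[OF w(1)] by simp_all
  then show "shape_sum V S (\<lambda>w. if hd w = f \<and> starts_up w = s then x ^ turns None w None else 0) =
    (1 + x) ^ ((n - 1) div 2) * shape_sum V S
      (\<lambda>w. if hd w = f \<and> tilde_ok s 0 (hr_of w) then x ^ count_nodes (extreme_node s) (hr_of w) else 0)"
    using V w(2) size_shape_eq_node_counts[of w]
    by (intro shape_sum_turns_eq_tilde) (auto simp: length_0_conv[symmetric])
qed

section \<open>Signed permutations with an even number of negative entries\<close>

lemma D_perms_signed_perms: "\<pi> \<in> D_perms n \<Longrightarrow> \<pi> \<in> signed_perms n"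
  unfolding D_perms_def by simp

lemma length_D_perms: "\<pi> \<in> D_perms n \<Longrightarrow> length \<pi> = n"
  unfolding D_perms_def signed_perms_def by simp

lemma finite_D_perms: "finite (D_perms n)"
proof (rule finite_subset)
  show "D_perms n \<subseteq> {\<pi>. set \<pi> \<subseteq> {- int n..int n} \<and> length \<pi> = n}"
  proof (clarify, intro conjI subsetI)
    fix \<pi> v assume "\<pi> \<in> D_perms n" "v \<in> set \<pi>"
    then have "\<bar>v\<bar> \<in> int ` {1..n}" unfolding D_perms_def signed_perms_def by force
    then show "v \<in> {- int n..int n}" by auto
  qed (simp add: length_D_perms)
  show "finite {\<pi>. set \<pi> \<subseteq> {- int n..int n} \<and> length \<pi> = n}"
    by (rule finite_lists_length_eq) simp
qed

lemma D_perms_iff_even: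
  assumes "\<pi> \<in> signed_perms n"
  shows "\<pi> \<in> D_perms n \<longleftrightarrow> even (card {a \<in> set_tree (hr_of (0 # \<pi>)). a < 0})"
proof -
  have "distinct \<pi>" using distinct_signed_perm[OF assms] by simp
  then have "length (filter (\<lambda>v. v < 0) \<pi>) = card {a \<in> set \<pi>. a < 0}"
    by (metis distinct_card distinct_filter set_filter)
  also have "{a \<in> set \<pi>. a < 0} = {a \<in> set_tree (hr_of (0 # \<pi>)). a < 0}" by auto
  finally show ?thesis using assms unfolding D_perms_def by simp
qed

text \<open>The set \<open>set (0 # \<pi>)\<close> fixes the signs of the entries, so \<open>D_perms n\<close> splits into the
  arrangements, starting with \<open>0\<close>, of the sets of this form.\<close>

lemma D_perms_same_set:
  assumes p0: "\<pi>0 \<in> D_perms n" and d: "distinct (0 # \<pi>)" and st: "set (0 # \<pi>) = set (0 # \<pi>0)"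
  shows "\<pi> \<in> D_perms n"
proof -
  have d0: "distinct (0 # \<pi>0)" using distinct_signed_perm[OF D_perms_signed_perms[OF p0]] .
  then have sp: "set \<pi> = set \<pi>0" using d st insert_ident[of 0 "set \<pi>" "set \<pi>0"] by simp
  then have "length \<pi> = length \<pi>0" using d d0 by (metis distinct.simps(2) distinct_card)
  moreover have "length (filter (\<lambda>v. v < 0) \<pi>) = length (filter (\<lambda>v. v < 0) \<pi>0)"
    using d d0 sp by (metis distinct.simps(2) distinct_card distinct_filter set_filter)
  ultimately show ?thesis using p0 sp unfolding D_perms_def signed_perms_def by simp
qed

lemma sum_D_perms_by_sets:
  "(\<Sum>\<pi>\<in>D_perms n. g (0 # \<pi>)) = (\<Sum>V\<in>(\<lambda>\<pi>. set (0 # \<pi>)) ` D_perms n.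
      \<Sum>w\<in>permutations_of_set V. if hd w = 0 then g w else (0 :: 'b::comm_monoid_add))"
proof -
  have fiber: "(\<Sum>\<pi>\<in>{\<pi> \<in> D_perms n. set (0 # \<pi>) = V}. g (0 # \<pi>)) =
      (\<Sum>w\<in>permutations_of_set V. if hd w = 0 then g w else 0)"
    if V_in: "V \<in> (\<lambda>\<pi>. set (0 # \<pi>)) ` D_perms n" for V
  proof -
    obtain \<pi>0 where p0: "\<pi>0 \<in> D_perms n" and V: "V = set (0 # \<pi>0)" using V_in by blast
    have "{\<pi> \<in> D_perms n. set (0 # \<pi>) = V} = {\<pi>. 0 # \<pi> \<in> permutations_of_set V}"
    proof (intro set_eqI iffI)
      fix \<pi> assume "\<pi> \<in> {\<pi> \<in> D_perms n. set (0 # \<pi>) = V}"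
      then show "\<pi> \<in> {\<pi>. 0 # \<pi> \<in> permutations_of_set V}"
        using distinct_signed_perm[OF D_perms_signed_perms] by (auto intro: permutations_of_setI)
    next
      fix \<pi> assume "\<pi> \<in> {\<pi>. 0 # \<pi> \<in> permutations_of_set V}"
      then have "distinct (0 # \<pi>)" "set (0 # \<pi>) = V" by (auto dest: permutations_of_setD)
      then show "\<pi> \<in> {\<pi> \<in> D_perms n. set (0 # \<pi>) = V}" using D_perms_same_set[OF p0] V by simp
    qed
    moreover have "{w \<in> permutations_of_set V. hd w = 0} = Cons 0 ` {\<pi>. 0 # \<pi> \<in> permutations_of_set V}"
    proof (intro set_eqI iffI)
      fix w assume w: "w \<in> {w \<in> permutations_of_set V. hd w = 0}"
      then have "w \<noteq> []" using V by (auto dest: permutations_of_setD)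
      then show "w \<in> Cons 0 ` {\<pi>. 0 # \<pi> \<in> permutations_of_set V}"
        using w by (cases w) auto
    qed auto
    ultimately show ?thesis
      by (simp add: sum.reindex sum.inter_filter[symmetric])
  qed
  show ?thesis
    unfolding sum.image_gen[OF finite_D_perms, where h = "\<lambda>\<pi>. g (0 # \<pi>)" and g = "\<lambda>\<pi>. set (0 # \<pi>)"]
    by (rule sum.cong[OF refl]) (rule fiber)
qed

lemma sum_D_perms_turns_eq_tilde:
  fixes x :: "'b::comm_semiring_1"
  assumes "n \<ge> 2"
  shows "(\<Sum>\<pi>\<in>D_perms n. if starts_up (0 # \<pi>) = s then x ^ turns None (0 # \<pi>) None else 0) =
    (1 + x) ^ ((n - 1) div 2) * (\<Sum>\<pi>\<in>D_perms n. if tilde_ok s 0 (hr_of (0 # \<pi>))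
      then x ^ count_nodes (extreme_node s) (hr_of (0 # \<pi>)) else 0)"
proof -
  have card: "card V = n + 1" if V_in: "V \<in> (\<lambda>\<pi>. set (0 # \<pi>)) ` D_perms n" for V
  proof -
    obtain \<pi> where p: "\<pi> \<in> D_perms n" and V: "V = set (0 # \<pi>)" using V_in by blast
    then show ?thesis
      using distinct_card[OF distinct_signed_perm[OF D_perms_signed_perms[OF p]]] length_D_perms[OF p]
      by simp
  qed
  define gL where "gL w = (if starts_up w = s then x ^ turns None w None else 0)" for w :: "int list"
  define gR where "gR w = (if tilde_ok s 0 (hr_of w) then x ^ count_nodes (extreme_node s) (hr_of w) else 0)"
    for w :: "int list"
  have "(\<Sum>w\<in>permutations_of_set V. if hd w = 0 then gL w else 0) =
      (1 + x) ^ ((n - 1) div 2) * (\<Sum>w\<in>permutations_of_set V. if hd w = 0 then gR w else 0)"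
    if "V \<in> (\<lambda>\<pi>. set (0 # \<pi>)) ` D_perms n" for V
  proof -
    have "(\<Sum>w\<in>permutations_of_set V. if hd w = 0 then gL w else 0) =
        (\<Sum>w\<in>permutations_of_set V. if hd w = 0 \<and> starts_up w = s then x ^ turns None w None else 0)"
      unfolding gL_def by (intro sum.cong) auto
    also have "\<dots> = (1 + x) ^ ((n - 1) div 2) * (\<Sum>w\<in>permutations_of_set V.
        if hd w = 0 \<and> tilde_ok s 0 (hr_of w) then x ^ count_nodes (extreme_node s) (hr_of w) else 0)"
      using card[OF that] assms by (intro sum_turns_eq_tilde) (auto simp: card_ge_0_finite)
    also have "(\<Sum>w\<in>permutations_of_set V.
        if hd w = 0 \<and> tilde_ok s 0 (hr_of w) then x ^ count_nodes (extreme_node s) (hr_of w) else 0) =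
        (\<Sum>w\<in>permutations_of_set V. if hd w = 0 then gR w else 0)"
      unfolding gR_def by (intro sum.cong) auto
    finally show ?thesis .
  qed
  then have "(\<Sum>\<pi>\<in>D_perms n. gL (0 # \<pi>)) = (1 + x) ^ ((n - 1) div 2) * (\<Sum>\<pi>\<in>D_perms n. gR (0 # \<pi>))"
    unfolding sum_D_perms_by_sets sum_distrib_left by (rule sum.cong[OF refl])
  then show ?thesis unfolding gL_def gR_def .
qed

lemma starts_up_D_perms:
  assumes "n \<ge> 1" "\<pi> \<in> D_perms n"
  shows "starts_up (0 # \<pi>) \<longleftrightarrow> hd \<pi> > 0" and "\<not> starts_up (0 # \<pi>) \<longleftrightarrow> hd \<pi> < 0"
proof -
  have "\<pi> \<noteq> []" using assms length_D_perms by fastforce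
  moreover have "hd \<pi> \<noteq> 0"
    using calculation distinct_signed_perm[OF D_perms_signed_perms[OF assms(2)]] hd_in_set by fastforce
  ultimately show "starts_up (0 # \<pi>) \<longleftrightarrow> hd \<pi> > 0" "\<not> starts_up (0 # \<pi>) \<longleftrightarrow> hd \<pi> < 0"
    unfolding starts_up_def by (auto simp: hd_conv_nth)
qed

lemma RD_pos_neg_eq_sum_turns:
  assumes "n \<ge> 1"
  shows "RD_pos n x =
      x * (\<Sum>\<pi>\<in>D_perms n. if starts_up (0 # \<pi>) then x ^ turns None (0 # \<pi>) None else 0)"
    and "RD_neg n x =
      x * (\<Sum>\<pi>\<in>D_perms n. if \<not> starts_up (0 # \<pi>) then x ^ turns None (0 # \<pi>) None else 0)"
  using starts_up_D_perms[OF assms]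
  by (simp_all add: RD_pos_def RD_neg_def sum.inter_filter[OF finite_D_perms, symmetric]
      runB_eq_turns sum_distrib_left cong: if_cong)

definition DHR_sign :: "bool \<Rightarrow> nat \<Rightarrow> int tree set" where
  "DHR_sign s n = {T \<in> BHR n. (\<forall>t\<in>tnodes T. nchildren t = 2 \<longrightarrow> extreme_node s t) \<and>
     (\<forall>t\<in>tnodes T. extreme_node s t \<and> nchildren t = 1 \<longrightarrow> even_onechild T t) \<and>
     even (card {a \<in> set_tree T. a < 0})}"

lemma DHR_plus_eq: "DHR_plus n = DHR_sign True n"
  and DHR_minus_eq: "DHR_minus n = DHR_sign False n"
  unfolding DHR_sign_def DHR_plus_def BHR_plus_def DHR_minus_def BHR_minus_def extreme_node_def
  by auto

lemma tilde_ok_0_iff: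
  assumes "distinct (inorder T)"
  shows "tilde_ok s 0 T \<longleftrightarrow> (\<forall>t\<in>tnodes T. nchildren t = 2 \<longrightarrow> extreme_node s t) \<and>
     (\<forall>t\<in>tnodes T. extreme_node s t \<and> nchildren t = 1 \<longrightarrow> even_onechild T t)"
  unfolding tilde_ok_iff[OF assms] tilde_node_def even_onechild_def by auto

lemma DHR_sign_eq_image:
  "DHR_sign s n = (\<lambda>\<pi>. hr_of (0 # \<pi>)) ` {\<pi> \<in> D_perms n. tilde_ok s 0 (hr_of (0 # \<pi>))}"
proof (intro set_eqI iffI)
  fix T assume "T \<in> DHR_sign s n"
  then have "T \<in> BHR n" and cond: "(\<forall>t\<in>tnodes T. nchildren t = 2 \<longrightarrow> extreme_node s t) \<and>
      (\<forall>t\<in>tnodes T. extreme_node s t \<and> nchildren t = 1 \<longrightarrow> even_onechild T t)"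
    and ev: "even (card {a \<in> set_tree T. a < 0})"
    unfolding DHR_sign_def by blast+
  then obtain \<pi> where p: "\<pi> \<in> signed_perms n" and T: "T = hr_of (0 # \<pi>)"
    unfolding BHR_eq_image by blast
  have "distinct (inorder T)" using T distinct_signed_perm[OF p] by simp
  then have "tilde_ok s 0 T" using tilde_ok_0_iff cond by blast
  moreover have "\<pi> \<in> D_perms n" using D_perms_iff_even[OF p] ev T by simp
  ultimately show "T \<in> (\<lambda>\<pi>. hr_of (0 # \<pi>)) ` {\<pi> \<in> D_perms n. tilde_ok s 0 (hr_of (0 # \<pi>))}"
    using T by blast
next
  fix T assume "T \<in> (\<lambda>\<pi>. hr_of (0 # \<pi>)) ` {\<pi> \<in> D_perms n. tilde_ok s 0 (hr_of (0 # \<pi>))}"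
  then obtain \<pi> where p: "\<pi> \<in> D_perms n" and T: "T = hr_of (0 # \<pi>)" and ok: "tilde_ok s 0 T"
    by blast
  note ps = D_perms_signed_perms[OF p]
  have "distinct (inorder T)" using T distinct_signed_perm[OF ps] by simp
  then have "(\<forall>t\<in>tnodes T. nchildren t = 2 \<longrightarrow> extreme_node s t) \<and>
      (\<forall>t\<in>tnodes T. extreme_node s t \<and> nchildren t = 1 \<longrightarrow> even_onechild T t)"
    using tilde_ok_0_iff ok by blast
  moreover have "T \<in> BHR n" unfolding BHR_eq_image using T ps by blast
  moreover have "even (card {a \<in> set_tree T. a < 0})" using D_perms_iff_even[OF ps] p T by simp
  ultimately show "T \<in> DHR_sign s n" unfolding DHR_sign_def by blast
qed

lemma sum_DHR_sign:
  fixes x :: "'b::comm_semiring_1"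
  shows "(\<Sum>T\<in>DHR_sign s n. x ^ (count_nodes (extreme_node s) T + 1)) =
    x * (\<Sum>\<pi>\<in>D_perms n. if tilde_ok s 0 (hr_of (0 # \<pi>))
      then x ^ count_nodes (extreme_node s) (hr_of (0 # \<pi>)) else 0)"
proof -
  have "inj_on (\<lambda>\<pi>. hr_of (0 # \<pi>)) X" for X :: "int list set"
    by (rule inj_onI) (metis inorder_hr_of list.inject)
  then show ?thesis
    unfolding DHR_sign_eq_image
    by (simp add: sum.reindex sum.inter_filter[OF finite_D_perms] sum_distrib_left power_add mult.commute
        if_distrib cong: if_cong)
qed

lemma max_count_eq_count_nodes: "T \<in> BHR n \<Longrightarrow> max_count T = count_nodes (extreme_node True) T"
  and min_count_eq_count_nodes: "T \<in> BHR n \<Longrightarrow> min_count T = count_nodes (extreme_node False) T"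
  unfolding BHR_def HR_tree_iff max_count_def min_count_def extreme_node_def[abs_def]
  by (auto simp: card_tnodes_eq_count_nodes)

lemma RD_sign_eq_sum_DHR_sign:
  fixes x :: "'b::comm_ring_1"
  assumes "n \<ge> 2"
  shows "x * (\<Sum>\<pi>\<in>D_perms n. if starts_up (0 # \<pi>) = s then x ^ turns None (0 # \<pi>) None else 0) =
    (1 + x) ^ ((n - 1) div 2) * (\<Sum>T\<in>DHR_sign s n. x ^ (count_nodes (extreme_node s) T + 1))"
  unfolding sum_D_perms_turns_eq_tilde[OF assms] sum_DHR_sign by (simp only: mult_ac)

lemma RD_pos_eq_sum_DHR_plus:
  assumes "n \<ge> 2"
  shows "RD_pos n x = (1 + x) ^ ((n - 1) div 2) * (\<Sum>T\<in>DHR_plus n. x ^ (max_count T + 1))"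
proof -
  have "(\<Sum>T\<in>DHR_plus n. x ^ (max_count T + 1)) =
      (\<Sum>T\<in>DHR_sign True n. x ^ (count_nodes (extreme_node True) T + 1))"
    unfolding DHR_plus_eq using max_count_eq_count_nodes by (intro sum.cong) (auto simp: DHR_sign_def)
  then show ?thesis using RD_pos_neg_eq_sum_turns(1)[of n x] RD_sign_eq_sum_DHR_sign[OF assms, of x True] assms
    by simp
qed

lemma RD_neg_eq_sum_DHR_minus:
  assumes "n \<ge> 2"
  shows "RD_neg n x = (1 + x) ^ ((n - 1) div 2) * (\<Sum>T\<in>DHR_minus n. x ^ (min_count T + 1))"
proof -
  have "(\<Sum>T\<in>DHR_minus n. x ^ (min_count T + 1)) =
      (\<Sum>T\<in>DHR_sign False n. x ^ (count_nodes (extreme_node False) T + 1))"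
    unfolding DHR_minus_eq using min_count_eq_count_nodes by (intro sum.cong) (auto simp: DHR_sign_def)
  then show ?thesis using RD_pos_neg_eq_sum_turns(2)[of n x] RD_sign_eq_sum_DHR_sign[OF assms, of x False] assms
    by simp
qed

lemma RD_eq_RD_pos_plus_RD_neg:
  assumes "n \<ge> 1"
  shows "RD n x = RD_pos n x + RD_neg n x"
proof -
  have "RD_pos n x + RD_neg n x = (\<Sum>\<pi>\<in>D_perms n.
      (if 0 < hd \<pi> then x ^ runB \<pi> else 0) + (if hd \<pi> < 0 then x ^ runB \<pi> else 0))"
    unfolding RD_pos_def RD_neg_def sum.distrib by (simp add: sum.inter_filter[OF finite_D_perms])
  also have "\<dots> = RD n x"
    unfolding RD_def using starts_up_D_perms[OF assms] by (intro sum.cong refl) auto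
  finally show ?thesis ..
qed

theorem mainTheorem19:
  fixes n :: nat and x :: "'a::comm_ring_1"
  assumes "n \<ge> 2"
  defines "m \<equiv> (n - 1) div 2"
  shows "RD_pos n x = (1 + x) ^ m * (\<Sum>T\<in>DHR_plus n. x ^ (max_count T + 1))
       \<and> RD_neg n x = (1 + x) ^ m * (\<Sum>T\<in>DHR_minus n. x ^ (min_count T + 1))
       \<and> RD n x = (1 + x) ^ m * ((\<Sum>T\<in>DHR_plus n. x ^ (max_count T + 1))
                                 + (\<Sum>T\<in>DHR_minus n. x ^ (min_count T + 1)))"
  using RD_pos_eq_sum_DHR_plus[OF assms(1), of x] RD_neg_eq_sum_DHR_minus[OF assms(1), of x]
    RD_eq_RD_pos_plus_RD_neg[of n x] assms(1)
  unfolding m_def by (simp add: distrib_left)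

end
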